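(* Let $M/K$ be obtained by strong cluster magnification from a subextension $L/K$ with $r_K(L)\ne1$. Then for fields $N_1,\dots,N_k$, the chain $M\supsetneq N_1\supsetneq\cdots\supsetneq N_k$ is the unique descending chain for $M/K$ if and only if $L\supsetneq N_1\supsetneq\cdots\supsetneq N_k$ is the unique descending chain for $L/K$.
   Context: $K$ is a perfect field with a fixed algebraic closure $\bar K$; all extensions finite inside $\bar K$; $\tilde L$ is the Galois closure of $L/K$. Cluster size $r_K(L)$: the number of roots in $L$ of the minimal polynomial over $K$ of a primitive element of $L/K$ (equals $|{\rm Aut}(L/K)|$). Strong cluster magnification: $M/K$ is obtained by strong cluster magnification from $L/K$ ($K\subseteq L\subseteq M$) if $[L:K]>2$ and there is a finite Galois $F/K$ with $\tilde L$ and $F$ linearly disjoint over $K$ and $LF=M$. The unique descending chain of a finite extension $P/K$ is $P=N_0\supsetneq N_1\supsetneq\cdots\supsetneq N_k$ where each $N_i$ is the unique intermediate field of $N_{i-1}/K$ with $N_{i-1}/N_i$ Galois of degree $r_K(N_{i-1})$, stopping at the first $N_k$ with $r_K(N_k)=1$. *)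

theory Defs
  imports "HOL-Computational_Algebra.Polynomial"
begin

text \<open>Ambient: an algebraically closed field of type 'a (containing a fixed algebraic
closure of K). Fields are subsets of 'a closed under the field operations.\<close>

definition is_subfield :: "'a::field set \<Rightarrow> bool" where
  "is_subfield E \<longleftrightarrow> 0 \<in> E \<and> 1 \<in> E \<and>
     (\<forall>x\<in>E. \<forall>y\<in>E. x + y \<in> E \<and> x - y \<in> E \<and> x * y \<in> E) \<and>
     (\<forall>x\<in>E. inverse x \<in> E)"

definition perfect_subfield :: "'a::field set \<Rightarrow> bool" where
  "perfect_subfield K \<longleftrightarrow> is_subfield K \<and>
     (CHAR('a) = 0 \<or> (\<forall>x\<in>K. \<exists>y\<in>K. y ^ CHAR('a) = x))"

definition gen_field :: "'a::field set \<Rightarrow> 'a set" where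
  "gen_field S = \<Inter>{E. is_subfield E \<and> S \<subseteq> E}"

definition compositum :: "'a::field set \<Rightarrow> 'a set \<Rightarrow> 'a set" where
  "compositum A B = gen_field (A \<union> B)"

definition lin_indep_over :: "'a::field set \<Rightarrow> 'a set \<Rightarrow> bool" where
  "lin_indep_over E S \<longleftrightarrow> finite S \<and>
     (\<forall>c. (\<forall>s\<in>S. c s \<in> E) \<and> (\<Sum>s\<in>S. c s * s) = 0 \<longrightarrow> (\<forall>s\<in>S. c s = 0))"

definition span_over :: "'a::field set \<Rightarrow> 'a set \<Rightarrow> 'a set" where
  "span_over E S = {x. \<exists>c. (\<forall>s\<in>S. c s \<in> E) \<and> x = (\<Sum>s\<in>S. c s * s)}"

definition is_basis_over :: "'a::field set \<Rightarrow> 'a set \<Rightarrow> 'a set \<Rightarrow> bool" where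
  "is_basis_over E F S \<longleftrightarrow> S \<subseteq> F \<and> lin_indep_over E S \<and> span_over E S = F"

definition finite_ext :: "'a::field set \<Rightarrow> 'a set \<Rightarrow> bool" where
  "finite_ext E F \<longleftrightarrow> is_subfield E \<and> is_subfield F \<and> E \<subseteq> F \<and> (\<exists>S. is_basis_over E F S)"

text \<open>Degree [F:E] (0 if not finite).\<close>
definition ext_degree :: "'a::field set \<Rightarrow> 'a set \<Rightarrow> nat" where
  "ext_degree E F = (if \<exists>S. is_basis_over E F S then card (SOME S. is_basis_over E F S) else 0)"

definition is_embedding :: "'a::field set \<Rightarrow> 'a set \<Rightarrow> ('a \<Rightarrow> 'a) \<Rightarrow> bool" where
  "is_embedding E F \<sigma> \<longleftrightarrow> \<sigma> 1 = 1 \<and>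
     (\<forall>x\<in>F. \<forall>y\<in>F. \<sigma> (x + y) = \<sigma> x + \<sigma> y \<and> \<sigma> (x * y) = \<sigma> x * \<sigma> y) \<and>
     (\<forall>x\<in>E. \<sigma> x = x)"

definition Aut :: "'a::field set \<Rightarrow> 'a set \<Rightarrow> ('a \<Rightarrow> 'a) set" where
  "Aut E F = {\<sigma>. is_embedding E F \<sigma> \<and> \<sigma> ` F = F \<and> (\<forall>x. x \<notin> F \<longrightarrow> \<sigma> x = x)}"

definition galois_ext :: "'a::field set \<Rightarrow> 'a set \<Rightarrow> bool" where
  "galois_ext E F \<longleftrightarrow> finite_ext E F \<and> card (Aut E F) = ext_degree E F"

definition galois_closure :: "'a::field set \<Rightarrow> 'a set \<Rightarrow> 'a set" where
  "galois_closure K L = gen_field (\<Union>{\<sigma> ` L | \<sigma>. is_embedding K L \<sigma>})"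

definition lin_disjoint :: "'a::field set \<Rightarrow> 'a set \<Rightarrow> 'a set \<Rightarrow> bool" where
  "lin_disjoint K A B \<longleftrightarrow> (\<forall>S. S \<subseteq> A \<and> lin_indep_over K S \<longrightarrow> lin_indep_over B S)"

definition poly_over :: "'a::field set \<Rightarrow> 'a poly \<Rightarrow> bool" where
  "poly_over E p \<longleftrightarrow> (\<forall>i. coeff p i \<in> E)"

definition min_poly :: "'a::field set \<Rightarrow> 'a \<Rightarrow> 'a poly" where
  "min_poly E \<theta> = (SOME p. poly_over E p \<and> lead_coeff p = 1 \<and> poly p \<theta> = 0 \<and>
       (\<forall>q. q \<noteq> 0 \<and> poly_over E q \<and> poly q \<theta> = 0 \<longrightarrow> degree p \<le> degree q))"

definition primitive_elem :: "'a::field set \<Rightarrow> 'a set \<Rightarrow> 'a \<Rightarrow> bool" where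
  "primitive_elem K L \<theta> \<longleftrightarrow> \<theta> \<in> L \<and> L = gen_field (insert \<theta> K)"

text \<open>Cluster size r_K(L): number of roots in L of the minimal polynomial over K
  of a primitive element of L/K.\<close>
definition cluster_size :: "'a::field set \<Rightarrow> 'a set \<Rightarrow> nat" where
  "cluster_size K L = card {\<beta>\<in>L. poly (min_poly K (SOME \<theta>. primitive_elem K L \<theta>)) \<beta> = 0}"

definition strong_cluster_magnification :: "'a::field set \<Rightarrow> 'a set \<Rightarrow> 'a set \<Rightarrow> bool" where
  "strong_cluster_magnification K L M \<longleftrightarrow> K \<subseteq> L \<and> L \<subseteq> M \<and> ext_degree K L > 2 \<and>
     (\<exists>F. K \<subseteq> F \<and> galois_ext K F \<and> lin_disjoint K (galois_closure K L) F \<and> compositum L F = M)"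

definition chain_step :: "'a::field set \<Rightarrow> 'a set \<Rightarrow> 'a set \<Rightarrow> bool" where
  "chain_step K P N \<longleftrightarrow>
     (is_subfield N \<and> K \<subseteq> N \<and> N \<subset> P \<and> galois_ext N P \<and> ext_degree N P = cluster_size K P) \<and>
     (\<forall>N'. is_subfield N' \<and> K \<subseteq> N' \<and> N' \<subseteq> P \<and> galois_ext N' P \<and>
           ext_degree N' P = cluster_size K P \<longrightarrow> N' = N)"

text \<open>unique_desc_chain K P [N1,...,Nk]: P = N0 \<supsetneq> N1 \<supsetneq> ... \<supsetneq> Nk is the unique
  descending chain of P/K (stopping at the first Nk with r_K(Nk) = 1).\<close>
fun unique_desc_chain :: "'a::field set \<Rightarrow> 'a set \<Rightarrow> 'a set list \<Rightarrow> bool" where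
  "unique_desc_chain K P [] \<longleftrightarrow> cluster_size K P = 1"
| "unique_desc_chain K P (N # Ns) \<longleftrightarrow>
     cluster_size K P \<noteq> 1 \<and> chain_step K P N \<and> unique_desc_chain K N Ns"

end

(*
  A perfect field makes every minimal polynomial separable, so by the primitive element theorem
  each finite extension P/K is simple, P = K(theta), and the roots of the minimal polynomial of
  theta lying in P correspond to the automorphisms of P/K. Hence r_K(P) = |Aut(P/K)|, and by
  Artin's argument the first step of the descending chain of P is the fixed field of Aut(P/K).

  For M = LF it therefore suffices to show that Aut(M/K) and Aut(L/K) have the same fixed field.
  Linear disjointness of F from the Galois closure of L shows that M meets this closure only in L
  and that [M:L] = [F:K]. So every automorphism of M restricts to one of L, and each automorphism
  of L extends to M in [F:K] ways. Thus Fix Aut(L/K) is contained in Fix Aut(M/K), while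
  [M : Fix Aut(L/K)] = [F:K] |Aut(L/K)| <= |Aut(M/K)| = [M : Fix Aut(M/K)]; the fixed fields
  coincide, and from there on the two descending chains are the same chain.
*)
theory Submission
  imports "HOL-Algebra.Multiplicative_Group" Defs
begin

section \<open>Subfields and polynomials over them\<close>

lemma subfield_zero: "is_subfield E \<Longrightarrow> 0 \<in> E"
  and subfield_one: "is_subfield E \<Longrightarrow> 1 \<in> E"
  and subfield_add: "is_subfield E \<Longrightarrow> x \<in> E \<Longrightarrow> y \<in> E \<Longrightarrow> x + y \<in> E"
  and subfield_diff: "is_subfield E \<Longrightarrow> x \<in> E \<Longrightarrow> y \<in> E \<Longrightarrow> x - y \<in> E"
  and subfield_mult: "is_subfield E \<Longrightarrow> x \<in> E \<Longrightarrow> y \<in> E \<Longrightarrow> x * y \<in> E"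
  and subfield_inverse: "is_subfield E \<Longrightarrow> x \<in> E \<Longrightarrow> inverse x \<in> E"
  by (simp_all add: is_subfield_def)

lemma subfield_uminus: "is_subfield E \<Longrightarrow> x \<in> E \<Longrightarrow> - x \<in> E"
  using subfield_diff[of E 0 x] subfield_zero[of E] by simp

lemma subfield_divide: "is_subfield E \<Longrightarrow> x \<in> E \<Longrightarrow> y \<in> E \<Longrightarrow> x / y \<in> E"
  by (simp add: divide_inverse subfield_mult subfield_inverse)

lemma subfield_power: "is_subfield E \<Longrightarrow> x \<in> E \<Longrightarrow> x ^ n \<in> E"
  by (induction n) (auto simp: subfield_one subfield_mult)

lemma subfield_sum: "is_subfield E \<Longrightarrow> (\<And>i. i \<in> A \<Longrightarrow> f i \<in> E) \<Longrightarrow> sum f A \<in> E"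
  by (induction A rule: infinite_finite_induct) (auto simp: subfield_zero subfield_add)

lemma subfield_of_nat: "is_subfield E \<Longrightarrow> of_nat n \<in> E"
  by (induction n) (auto simp: subfield_zero subfield_one subfield_add)

lemma gen_field_subfield: "is_subfield (gen_field S)"
  unfolding gen_field_def is_subfield_def by auto

lemma gen_field_superset: "S \<subseteq> gen_field S"
  unfolding gen_field_def by auto

lemma gen_field_least: "is_subfield E \<Longrightarrow> S \<subseteq> E \<Longrightarrow> gen_field S \<subseteq> E"
  unfolding gen_field_def by auto

lemma gen_field_mono: "S \<subseteq> T \<Longrightarrow> gen_field S \<subseteq> gen_field T"
  by (meson gen_field_least gen_field_subfield gen_field_superset order_trans)

lemma poly_over_coeff: "poly_over E p \<Longrightarrow> coeff p i \<in> E"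
  by (simp add: poly_over_def)

lemma poly_over_mono: "poly_over E p \<Longrightarrow> E \<subseteq> F \<Longrightarrow> poly_over F p"
  by (auto simp: poly_over_def)

context
  fixes E :: "'a::field set"
  assumes E: "is_subfield E"
begin

lemma poly_over_0: "poly_over E 0"
  by (simp add: poly_over_def subfield_zero[OF E])

lemma poly_over_pCons: "a \<in> E \<Longrightarrow> poly_over E p \<Longrightarrow> poly_over E (pCons a p)"
  by (auto simp: poly_over_def coeff_pCons split: nat.splits)

lemma poly_over_const: "a \<in> E \<Longrightarrow> poly_over E [:a:]"
  by (simp add: poly_over_pCons poly_over_0)

lemma poly_over_1: "poly_over E 1"
  by (simp add: poly_over_def coeff_1 subfield_zero[OF E] subfield_one[OF E])

lemma poly_over_linear: "a \<in> E \<Longrightarrow> poly_over E [:- a, 1:]"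
  by (simp add: poly_over_pCons poly_over_const subfield_uminus[OF E] subfield_one[OF E])

lemma poly_over_add: "poly_over E p \<Longrightarrow> poly_over E q \<Longrightarrow> poly_over E (p + q)"
  by (simp add: poly_over_def subfield_add[OF E])

lemma poly_over_diff: "poly_over E p \<Longrightarrow> poly_over E q \<Longrightarrow> poly_over E (p - q)"
  by (simp add: poly_over_def subfield_diff[OF E])

lemma poly_over_smult: "a \<in> E \<Longrightarrow> poly_over E p \<Longrightarrow> poly_over E (smult a p)"
  by (simp add: poly_over_def subfield_mult[OF E])

lemma poly_over_mult: "poly_over E p \<Longrightarrow> poly_over E q \<Longrightarrow> poly_over E (p * q)"
  unfolding poly_over_def coeff_mult by (auto intro!: subfield_sum[OF E] subfield_mult[OF E])

lemma poly_over_monom: "a \<in> E \<Longrightarrow> poly_over E (monom a n)"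
  by (simp add: poly_over_def coeff_monom subfield_zero[OF E])

lemma poly_over_sum: "(\<And>i. i \<in> A \<Longrightarrow> poly_over E (f i)) \<Longrightarrow> poly_over E (sum f A)"
  by (induction A rule: infinite_finite_induct) (auto simp: poly_over_0 poly_over_add)

lemma poly_over_prod: "(\<And>i. i \<in> A \<Longrightarrow> poly_over E (f i)) \<Longrightarrow> poly_over E (prod f A)"
  by (induction A rule: infinite_finite_induct) (auto simp: poly_over_1 poly_over_mult)

lemma poly_over_sum_monom: "(\<And>i. i \<in> A \<Longrightarrow> d i \<in> E) \<Longrightarrow> poly_over E (\<Sum>i\<in>A. monom (d i) i)"
  by (rule poly_over_sum) (auto intro: poly_over_monom)

lemma poly_over_pcompose: "poly_over E p \<Longrightarrow> poly_over E q \<Longrightarrow> poly_over E (pcompose p q)"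
proof (induction p)
  case (pCons a p)
  have "a \<in> E" and "poly_over E p"
    using pCons.prems(1) unfolding poly_over_def by (metis coeff_pCons_0, metis coeff_pCons_Suc)
  with pCons show ?case by (simp add: pcompose_pCons poly_over_add poly_over_const poly_over_mult)
qed (simp add: poly_over_0)

lemma poly_over_pderiv: "poly_over E p \<Longrightarrow> poly_over E (pderiv p)"
  unfolding poly_over_def coeff_pderiv using subfield_mult[OF E] subfield_of_nat[OF E] by blast

lemma poly_in_subfield: "poly_over E p \<Longrightarrow> x \<in> E \<Longrightarrow> poly p x \<in> E"
  unfolding poly_altdef
  by (auto intro!: subfield_sum[OF E] subfield_mult[OF E] subfield_power[OF E] poly_over_coeff)

lemma poly_over_division:
  assumes q: "poly_over E q" "q \<noteq> 0"
  shows "poly_over E p \<Longrightarrow>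
    \<exists>s r. poly_over E s \<and> poly_over E r \<and> p = s * q + r \<and> (r = 0 \<or> degree r < degree q)"
proof (induction "degree p" arbitrary: p rule: less_induct)
  case (less p)
  show ?case
  proof (cases "p = 0 \<or> degree p < degree q")
    case True
    then show ?thesis using less.prems by (intro exI[of _ 0] exI[of _ p]) (auto simp: poly_over_0)
  next
    case False
    hence p0: "p \<noteq> 0" and dq: "degree q \<le> degree p" by auto
    define m where "m = monom (lead_coeff p / lead_coeff q) (degree p - degree q)"
    have mE: "poly_over E m"
      unfolding m_def using less.prems q by (simp add: poly_over_coeff subfield_divide[OF E] poly_over_monom)
    have c0: "lead_coeff p / lead_coeff q \<noteq> 0" using p0 q by simp
    have dm: "degree (m * q) = degree p"
      unfolding m_def using c0 q dq by (simp add: degree_mult_eq degree_monom_eq)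
    have "lead_coeff (m * q) = lead_coeff m * lead_coeff q" by (rule lead_coeff_mult)
    then have lm: "lead_coeff (m * q) = lead_coeff p"
      unfolding m_def using c0 q by (simp add: degree_monom_eq)
    have "p - m * q = 0 \<or> degree (p - m * q) < degree p"
    proof (cases "p - m * q = 0")
      case False
      moreover have "degree (p - m * q) \<le> degree p" using dm by (metis degree_diff_le le_refl)
      moreover have "coeff (p - m * q) (degree p) = 0" using dm lm by simp
      ultimately show ?thesis by (metis le_neq_implies_less leading_coeff_0_iff)
    qed simp
    then show ?thesis
    proof
      assume "p - m * q = 0"
      then show ?thesis using mE by (intro exI[of _ m] exI[of _ 0]) (auto simp: poly_over_0)
    next
      assume "degree (p - m * q) < degree p"
      from less.hyps[OF this poly_over_diff[OF less.prems poly_over_mult[OF mE q(1)]]]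
      obtain s r where "poly_over E s" "poly_over E r" "p - m * q = s * q + r"
        "r = 0 \<or> degree r < degree q" by blast
      then show ?thesis using mE
        by (intro exI[of _ "s + m"] exI[of _ r]) (auto simp: poly_over_add algebra_simps)
    qed
  qed
qed

lemma poly_over_div_mod:
  assumes q: "poly_over E q" and p: "poly_over E p"
  shows "poly_over E (p div q)" "poly_over E (p mod q)"
proof -
  have "poly_over E (p div q) \<and> poly_over E (p mod q)"
  proof (cases "q = 0")
    case True then show ?thesis using p by (simp add: poly_over_0)
  next
    case False
    obtain s r where sr: "poly_over E s" "poly_over E r" "p = s * q + r" "r = 0 \<or> degree r < degree q"
      using poly_over_division[OF q False p] by blast
    have "(p div q, p mod q) = (s, r)"
    proof (rule euclidean_relation_polyI)
      assume "q dvd p"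
      then have "q dvd r" using sr(3) by (simp add: dvd_add_right_iff)
      then show "r = 0 \<and> p = s * q" using sr(3,4) False
        by (metis add.right_neutral dvd_imp_degree_le linorder_not_le)
    next
      assume "\<not> q dvd p"
      then show "degree r < degree q \<and> p = s * q + r" using sr by auto
    qed (use False in auto)
    then show ?thesis using sr by auto
  qed
  then show "poly_over E (p div q)" "poly_over E (p mod q)" by auto
qed

end

section \<open>Linear algebra over a subfield\<close>

definition lin_indep_family :: "'a::field set \<Rightarrow> 'b set \<Rightarrow> ('b \<Rightarrow> 'a) \<Rightarrow> bool" where
  "lin_indep_family E I f \<longleftrightarrow> finite I \<and>
     (\<forall>d. (\<forall>i\<in>I. d i \<in> E) \<and> (\<Sum>i\<in>I. d i * f i) = 0 \<longrightarrow> (\<forall>i\<in>I. d i = 0))"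

definition subspace_over :: "'a::field set \<Rightarrow> 'a set \<Rightarrow> bool" where
  "subspace_over E V \<longleftrightarrow> 0 \<in> V \<and> (\<forall>x\<in>V. \<forall>y\<in>V. x + y \<in> V) \<and> (\<forall>c\<in>E. \<forall>x\<in>V. c * x \<in> V)"

lemma lin_indep_familyD:
  "lin_indep_family E I f \<Longrightarrow> (\<And>i. i \<in> I \<Longrightarrow> d i \<in> E) \<Longrightarrow> (\<Sum>i\<in>I. d i * f i) = 0 \<Longrightarrow> i \<in> I \<Longrightarrow> d i = 0"
  unfolding lin_indep_family_def by blast

lemma lin_indep_overD:
  "lin_indep_over E S \<Longrightarrow> (\<And>s. s \<in> S \<Longrightarrow> d s \<in> E) \<Longrightarrow> (\<Sum>s\<in>S. d s * s) = 0 \<Longrightarrow> s \<in> S \<Longrightarrow> d s = 0"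
  unfolding lin_indep_over_def by blast

lemma lin_indep_over_finite: "lin_indep_over E S \<Longrightarrow> finite S"
  by (simp add: lin_indep_over_def)

lemma span_overI: "(\<And>s. s \<in> S \<Longrightarrow> c s \<in> E) \<Longrightarrow> (\<Sum>s\<in>S. c s * s) \<in> span_over E S"
  unfolding span_over_def by blast

lemma span_over_empty: "span_over E {} = {0}"
  unfolding span_over_def by simp

lemma span_over_mono_field: "E \<subseteq> F \<Longrightarrow> span_over E S \<subseteq> span_over F S"
  unfolding span_over_def by blast

lemma subfield_subspace_over: "is_subfield F \<Longrightarrow> E \<subseteq> F \<Longrightarrow> subspace_over E F"
  unfolding subspace_over_def by (auto simp: subfield_zero subfield_add subfield_mult)

lemma subspace_over_sum:
  "subspace_over E V \<Longrightarrow> (\<And>i. i \<in> A \<Longrightarrow> c i \<in> E) \<Longrightarrow> (\<And>i. i \<in> A \<Longrightarrow> f i \<in> V) \<Longrightarrow>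
    (\<Sum>i\<in>A. c i * f i) \<in> V"
  by (induction A rule: infinite_finite_induct) (auto simp: subspace_over_def)

lemma span_over_least: "subspace_over E V \<Longrightarrow> S \<subseteq> V \<Longrightarrow> span_over E S \<subseteq> V"
  unfolding span_over_def by (auto intro!: subspace_over_sum)

lemma lin_indep_family_iff_image:
  fixes f :: "'b \<Rightarrow> 'a::field"
  assumes inj: "inj_on f I"
  shows "lin_indep_family E I f \<longleftrightarrow> lin_indep_over E (f ` I)"
proof -
  have sum_image: "(\<Sum>v\<in>f ` I. c v * v) = (\<Sum>i\<in>I. c (f i) * f i)" for c :: "'a \<Rightarrow> 'a"
    using sum.reindex[OF inj, of "\<lambda>v. c v * v"] by simp
  show ?thesis
  proof
    assume fi: "lin_indep_family E I f"
    show "lin_indep_over E (f ` I)" unfolding lin_indep_over_def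
    proof (intro conjI allI impI)
      show "finite (f ` I)" using fi by (simp add: lin_indep_family_def)
      fix c assume c: "(\<forall>s\<in>f ` I. c s \<in> E) \<and> (\<Sum>s\<in>f ` I. c s * s) = 0"
      then have "\<And>i. i \<in> I \<Longrightarrow> c (f i) = 0"
        by (intro lin_indep_familyD[OF fi, of "\<lambda>i. c (f i)"]) (auto simp: sum_image)
      then show "\<forall>s\<in>f ` I. c s = 0" by blast
    qed
  next
    assume li: "lin_indep_over E (f ` I)"
    show "lin_indep_family E I f" unfolding lin_indep_family_def
    proof (intro conjI allI impI)
      show "finite I" using lin_indep_over_finite[OF li] finite_image_iff[OF inj] by blast
      fix d assume d: "(\<forall>i\<in>I. d i \<in> E) \<and> (\<Sum>i\<in>I. d i * f i) = 0"
      define c where "c = (\<lambda>v. d (the_inv_into I f v))"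
      have cf: "c (f i) = d i" if "i \<in> I" for i
        using that by (simp add: c_def the_inv_into_f_f[OF inj])
      have "(\<Sum>v\<in>f ` I. c v * v) = 0" using d cf by (simp add: sum_image)
      moreover have "\<And>v. v \<in> f ` I \<Longrightarrow> c v \<in> E" using d cf by auto
      ultimately show "\<forall>i\<in>I. d i = 0" using lin_indep_overD[OF li, of c] cf by (metis image_eqI)
    qed
  qed
qed

lemma span_over_family:
  fixes f :: "'b \<Rightarrow> 'a::field"
  assumes inj: "inj_on f I" and d: "\<And>i. i \<in> I \<Longrightarrow> d i \<in> E"
  shows "(\<Sum>i\<in>I. d i * f i) \<in> span_over E (f ` I)"
proof -
  have "(\<Sum>i\<in>I. d i * f i) = (\<Sum>v\<in>f ` I. d (the_inv_into I f v) * v)"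
    using sum.reindex[OF inj, of "\<lambda>v. d (the_inv_into I f v) * v"]
    by (simp add: the_inv_into_f_f[OF inj])
  moreover have "\<And>v. v \<in> f ` I \<Longrightarrow> d (the_inv_into I f v) \<in> E"
    using d by (auto simp: the_inv_into_f_f[OF inj])
  ultimately show ?thesis using span_overI by metis
qed

context
  fixes E :: "'a::field set"
  assumes E: "is_subfield E"
begin

lemma span_over_subspace: "subspace_over E (span_over E S)"
  unfolding subspace_over_def
proof (intro conjI ballI)
  show "0 \<in> span_over E S"
    using span_overI[of S "\<lambda>_. 0" E] subfield_zero[OF E] by simp
  fix x y assume "x \<in> span_over E S" "y \<in> span_over E S"
  then obtain c d where "\<forall>s\<in>S. c s \<in> E" "x = (\<Sum>s\<in>S. c s * s)" "\<forall>s\<in>S. d s \<in> E" "y = (\<Sum>s\<in>S. d s * s)"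
    unfolding span_over_def by blast
  then show "x + y \<in> span_over E S"
    using span_overI[of S "\<lambda>s. c s + d s" E] by (simp add: subfield_add[OF E] sum.distrib algebra_simps)
next
  fix a x assume a: "a \<in> E" and "x \<in> span_over E S"
  then obtain c where "\<forall>s\<in>S. c s \<in> E" "x = (\<Sum>s\<in>S. c s * s)"
    unfolding span_over_def by blast
  then show "a * x \<in> span_over E S"
    using a span_overI[of S "\<lambda>s. a * c s" E] by (simp add: subfield_mult[OF E] sum_distrib_left mult.assoc)
qed

lemma span_over_superset: "finite S \<Longrightarrow> S \<subseteq> span_over E S"
proof
  fix x assume "finite S" "x \<in> S"
  then have "(\<Sum>s\<in>S. (if s = x then 1 else 0) * s) = x"
    by (subst sum.cong[OF refl, of _ _ "\<lambda>s. if s = x then s else 0"]) auto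
  then show "x \<in> span_over E S"
    using span_overI[of S "\<lambda>s. if s = x then 1 else 0" E] subfield_zero[OF E] subfield_one[OF E] by simp
qed

lemma lin_indep_family_inj_on:
  assumes fi: "lin_indep_family E I f" shows "inj_on f I"
proof (rule inj_onI, rule ccontr)
  fix i j assume ij: "i \<in> I" "j \<in> I" "f i = f j" "i \<noteq> j"
  define d where "d = (\<lambda>k. if k = i then 1 else if k = j then -1 else (0::'a))"
  have "finite I" using fi lin_indep_family_def by blast
  have "(\<Sum>k\<in>I. d k * f k) = (\<Sum>k\<in>I. (if k = i then f k else 0) - (if k = j then f k else 0))"
    by (rule sum.cong) (use ij(4) in \<open>auto simp: d_def\<close>)
  also have "\<dots> = f i - f j" using \<open>finite I\<close> ij by (simp add: sum_subtractf)
  finally have "(\<Sum>k\<in>I. d k * f k) = f i - f j" .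
  moreover have "\<And>k. k \<in> I \<Longrightarrow> d k \<in> E"
    by (auto simp: d_def subfield_zero[OF E] subfield_one[OF E] subfield_uminus[OF E])
  ultimately have "d i = 0" using lin_indep_familyD[OF fi, of d i] ij by simp
  then show False by (simp add: d_def)
qed

lemma lin_indep_family_image:
  assumes "lin_indep_family E I f"
  shows "lin_indep_over E (f ` I)" "card (f ` I) = card I"
  using assms lin_indep_family_iff_image lin_indep_family_inj_on card_image by blast+

lemma lin_indep_over_zero: "lin_indep_over E S \<Longrightarrow> 0 \<notin> S"
proof
  assume S: "lin_indep_over E S" and "0 \<in> S"
  moreover have "(\<Sum>s\<in>S. (if s = 0 then 1 else 0) * s) = 0" by (rule sum.neutral) auto
  ultimately have "(if (0::'a) = 0 then 1 else 0) = (0::'a)"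
    using lin_indep_overD[OF S, of "\<lambda>s. if s = 0 then 1 else 0" 0] subfield_zero[OF E] subfield_one[OF E]
    by presburger
  then show False by simp
qed

lemma lin_indep_over_insert:
  assumes S: "lin_indep_over E S" and x: "x \<notin> span_over E S"
  shows "lin_indep_over E (insert x S)"
  unfolding lin_indep_over_def
proof (intro conjI allI impI)
  have fS: "finite S" using S lin_indep_over_finite by blast
  then show "finite (insert x S)" by simp
  have xS: "x \<notin> S" using x span_over_superset[OF fS] by blast
  fix c assume c: "(\<forall>s\<in>insert x S. c s \<in> E) \<and> (\<Sum>s\<in>insert x S. c s * s) = 0"
  then have eq: "c x * x + (\<Sum>s\<in>S. c s * s) = 0" using fS xS by simp
  have cx: "c x = 0"
  proof (rule ccontr)
    assume cx: "c x \<noteq> 0"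
    have "(\<Sum>s\<in>S. (- c s / c x) * s) = - (\<Sum>s\<in>S. c s * s) / c x"
      by (simp add: sum_divide_distrib sum_negf)
    also have "\<dots> = x" using eq cx by (simp add: field_simps add_eq_0_iff)
    finally have "x = (\<Sum>s\<in>S. (- c s / c x) * s)" by simp
    moreover have "\<And>s. s \<in> S \<Longrightarrow> - c s / c x \<in> E"
      using c by (auto intro!: subfield_divide[OF E] subfield_uminus[OF E])
    ultimately show False using x span_overI[of S "\<lambda>s. - c s / c x" E] by metis
  qed
  then have "(\<Sum>s\<in>S. c s * s) = 0" using eq by simp
  then have "\<forall>s\<in>S. c s = 0" using lin_indep_overD[OF S, of c] c by blast
  then show "\<forall>s\<in>insert x S. c s = 0" using cx by blast
qed

lemma lin_indep_insert_not_in_span: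
  assumes I: "lin_indep_over E (insert x S)" and xS: "x \<notin> S"
  shows "x \<notin> span_over E S"
proof
  assume "x \<in> span_over E S"
  then obtain c where c: "\<And>s. s \<in> S \<Longrightarrow> c s \<in> E" "x = (\<Sum>s\<in>S. c s * s)" unfolding span_over_def by blast
  define d where "d = (\<lambda>s. if s = x then - 1 else c s)"
  have fS: "finite S" using lin_indep_over_finite[OF I] by simp
  have "(\<Sum>s\<in>S. d s * s) = (\<Sum>s\<in>S. c s * s)" by (rule sum.cong) (use xS in \<open>auto simp: d_def\<close>)
  then have "(\<Sum>s\<in>insert x S. d s * s) = 0" using fS xS c(2) by (simp add: d_def)
  moreover have "\<And>s. s \<in> insert x S \<Longrightarrow> d s \<in> E"
    using c(1) by (auto simp: d_def subfield_uminus[OF E] subfield_one[OF E])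
  ultimately have "d x = 0" using lin_indep_overD[OF I, of d x] by simp
  then show False by (simp add: d_def)
qed

lemma lin_indep_shear:
  assumes S: "lin_indep_over E S" and s0: "s0 \<in> S" and c: "\<And>s. s \<in> S \<Longrightarrow> c s \<in> E"
  shows "lin_indep_family E (S - {s0}) (\<lambda>s. s - c s * s0)"
  unfolding lin_indep_family_def
proof (intro conjI allI impI)
  have fS: "finite S" using S lin_indep_over_finite by blast
  then show "finite (S - {s0})" by simp
  fix d assume d: "(\<forall>s\<in>S - {s0}. d s \<in> E) \<and> (\<Sum>s\<in>S - {s0}. d s * (s - c s * s0)) = 0"
  define k where "k = (\<Sum>s\<in>S - {s0}. d s * c s)"
  define e where "e = (\<lambda>s. if s = s0 then - k else d s)"
  have "(\<Sum>s\<in>S - {s0}. d s * (s - c s * s0)) = (\<Sum>s\<in>S - {s0}. d s * s) - k * s0"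
    unfolding k_def by (simp add: algebra_simps sum_subtractf sum_distrib_right sum_distrib_left)
  moreover have "(\<Sum>s\<in>S. e s * s) = e s0 * s0 + (\<Sum>s\<in>S - {s0}. d s * s)"
    using fS s0 by (simp add: sum.remove e_def)
  ultimately have "(\<Sum>s\<in>S. e s * s) = 0" using d by (simp add: e_def)
  moreover have "k \<in> E"
    unfolding k_def using d c by (auto intro!: subfield_sum[OF E] subfield_mult[OF E])
  then have "\<And>s. s \<in> S \<Longrightarrow> e s \<in> E" using d by (auto simp: e_def subfield_uminus[OF E])
  ultimately have "\<forall>s\<in>S. e s = 0" using lin_indep_overD[OF S, of e] by blast
  then show "\<forall>s\<in>S - {s0}. d s = 0" unfolding e_def by (metis DiffE singletonI)
qed

text \<open>Steinitz exchange: a vector of \<open>S\<close> with nonzero \<open>t\<close>-coordinate is used to eliminate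
  \<open>t\<close> from all other vectors of \<open>S\<close>, and \<open>lin_indep_shear\<close> keeps them independent.\<close>

lemma lin_indep_card_le_span:
  assumes fT: "finite T"
  shows "S \<subseteq> span_over E T \<Longrightarrow> lin_indep_over E S \<Longrightarrow> card S \<le> card T"
  using fT
proof (induction T arbitrary: S rule: finite_induct)
  case empty
  then have "S \<subseteq> {0}" by (simp add: span_over_empty)
  then have "S = {}" using lin_indep_over_zero[OF empty.prems(2)] by blast
  then show ?case by simp
next
  case (insert t T)
  have fS: "finite S" using insert.prems lin_indep_over_finite by blast
  have "\<forall>s\<in>S. \<exists>c. (\<forall>u\<in>insert t T. c u \<in> E) \<and> s = (\<Sum>u\<in>insert t T. c u * u)"
    using insert.prems(1) unfolding span_over_def by blast
  then obtain C where C: "\<And>s u. s \<in> S \<Longrightarrow> u \<in> insert t T \<Longrightarrow> C s u \<in> E"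
    "\<And>s. s \<in> S \<Longrightarrow> s = (\<Sum>u\<in>insert t T. C s u * u)"
    by metis
  have Cs: "\<And>s. s \<in> S \<Longrightarrow> s = C s t * t + (\<Sum>u\<in>T. C s u * u)"
    using C(2) insert.hyps by simp
  show ?case
  proof (cases "\<forall>s\<in>S. C s t = 0")
    case True
    have "S \<subseteq> span_over E T"
    proof
      fix s assume s: "s \<in> S"
      then have "s = (\<Sum>u\<in>T. C s u * u)" using Cs True by force
      then show "s \<in> span_over E T" using span_overI[of T "C s" E] C(1)[OF s] by auto
    qed
    then have "card S \<le> card T" using insert.IH insert.prems(2) by blast
    then show ?thesis using insert.hyps by simp
  next
    case False
    then obtain s0 where s0: "s0 \<in> S" "C s0 t \<noteq> 0" by blast
    define \<phi> where "\<phi> = (\<lambda>s. s - (C s t / C s0 t) * s0)"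
    have "\<phi> s \<in> span_over E T" if s: "s \<in> S" for s
    proof -
      have "\<phi> s = (\<Sum>u\<in>T. (C s u - (C s t / C s0 t) * C s0 u) * u)"
      proof -
        have "(\<Sum>u\<in>T. (C s u - (C s t / C s0 t) * C s0 u) * u) =
            (\<Sum>u\<in>T. C s u * u) - (C s t / C s0 t) * (\<Sum>u\<in>T. C s0 u * u)"
          by (simp add: algebra_simps sum_subtractf sum_distrib_left)
        also have "\<dots> = (s - C s t * t) - (C s t / C s0 t) * (s0 - C s0 t * t)"
        proof -
          have "(\<Sum>u\<in>T. C s u * u) = s - C s t * t" using Cs[OF s] by (simp add: algebra_simps)
          moreover have "(\<Sum>u\<in>T. C s0 u * u) = s0 - C s0 t * t"
            using Cs[OF s0(1)] by (simp add: algebra_simps)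
          ultimately show ?thesis by (simp only:)
        qed
        also have "\<dots> = \<phi> s" unfolding \<phi>_def using s0(2) by (simp add: field_simps)
        finally show ?thesis by simp
      qed
      moreover have "\<And>u. u \<in> T \<Longrightarrow> C s u - (C s t / C s0 t) * C s0 u \<in> E"
        using C(1) s s0 by (auto intro!: subfield_diff[OF E] subfield_mult[OF E] subfield_divide[OF E])
      ultimately show ?thesis using span_overI[of T "\<lambda>u. C s u - (C s t / C s0 t) * C s0 u" E] by metis
    qed
    then have "\<phi> ` (S - {s0}) \<subseteq> span_over E T" by blast
    moreover have "lin_indep_family E (S - {s0}) \<phi>"
      unfolding \<phi>_def using C(1) s0(1)
      by (intro lin_indep_shear[OF insert.prems(2) s0(1)]) (auto intro!: subfield_divide[OF E])
    ultimately have "card (S - {s0}) \<le> card T"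
      using insert.IH lin_indep_family_image by metis
    then show ?thesis using s0 fS insert.hyps by (simp add: card_Diff_singleton)
  qed
qed

lemma basis_over_exists:
  assumes fT: "finite T" and V: "subspace_over E V" and VT: "V \<subseteq> span_over E T"
  shows "\<exists>B. is_basis_over E V B \<and> card B \<le> card T"
proof -
  define P where "P = (\<lambda>n. \<exists>B. B \<subseteq> V \<and> lin_indep_over E B \<and> card B = n)"
  have P0: "P 0" unfolding P_def by (intro exI[of _ "{}"]) (simp add: lin_indep_over_def)
  have Pb: "\<forall>n. P n \<longrightarrow> n \<le> card T"
    unfolding P_def using lin_indep_card_le_span[OF fT] VT by blast
  obtain n where n: "P n" "\<forall>m. P m \<longrightarrow> m \<le> n" using Nat.ex_has_greatest_nat[OF P0 Pb] by blast
  then obtain B where B: "B \<subseteq> V" "lin_indep_over E B" "card B = n" unfolding P_def by blast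
  have fB: "finite B" using B lin_indep_over_finite by blast
  have "V \<subseteq> span_over E B"
  proof
    fix v assume v: "v \<in> V"
    show "v \<in> span_over E B"
    proof (rule ccontr)
      assume nv: "v \<notin> span_over E B"
      then have "v \<notin> B" using span_over_superset[OF fB] by blast
      have "P (Suc n)" unfolding P_def using lin_indep_over_insert[OF B(2) nv] B v \<open>v \<notin> B\<close> fB
        by (intro exI[of _ "insert v B"]) auto
      then show False using n by fastforce
    qed
  qed
  then show ?thesis using span_over_least[OF V B(1)] B Pb n unfolding is_basis_over_def by auto
qed

lemma basis_over_card_eq:
  assumes "is_basis_over E F B1" "is_basis_over E F B2"
  shows "card B1 = card B2"
  using lin_indep_card_le_span[of B1 B2] lin_indep_card_le_span[of B2 B1] assms
  unfolding is_basis_over_def by (metis lin_indep_over_finite le_antisym order_refl)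

lemma ext_degree_basis: "is_basis_over E F B \<Longrightarrow> ext_degree E F = card B"
  unfolding ext_degree_def by (metis (mono_tags, lifting) basis_over_card_eq someI)

lemma card_lin_indep_le_ext_degree:
  assumes B: "is_basis_over E F B" and S: "S \<subseteq> F" "lin_indep_over E S"
  shows "card S \<le> ext_degree E F"
  using lin_indep_card_le_span[of B S] S B ext_degree_basis[OF B] lin_indep_over_finite
  unfolding is_basis_over_def by auto

lemma basis_over_of_card_eq:
  assumes B: "is_basis_over E F B" and S: "S \<subseteq> F" "lin_indep_over E S"
    and c: "card S = ext_degree E F"
  shows "is_basis_over E F S"
proof -
  have fS: "finite S" using S lin_indep_over_finite by blast
  have "F \<subseteq> span_over E S"
  proof
    fix v assume v: "v \<in> F"
    show "v \<in> span_over E S"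
    proof (rule ccontr)
      assume nv: "v \<notin> span_over E S"
      then have "v \<notin> S" using span_over_superset[OF fS] by blast
      have "card (insert v S) \<le> ext_degree E F"
        using card_lin_indep_le_ext_degree[OF B _ lin_indep_over_insert[OF S(2) nv]] v S by auto
      then show False using c fS \<open>v \<notin> S\<close> by simp
    qed
  qed
  moreover have "subspace_over E F" using B span_over_subspace unfolding is_basis_over_def by metis
  ultimately show ?thesis using span_over_least[of E F S] S unfolding is_basis_over_def by auto
qed

end


section \<open>Finite extensions and degrees\<close>

lemma finite_extD: "finite_ext E F \<Longrightarrow> is_subfield E \<and> is_subfield F \<and> E \<subseteq> F"
  by (simp add: finite_ext_def)

lemma finite_ext_basis: "finite_ext E F \<Longrightarrow> \<exists>B. is_basis_over E F B \<and> ext_degree E F = card B"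
  unfolding finite_ext_def using ext_degree_basis by blast

lemma basis_over_finite: "is_basis_over E F B \<Longrightarrow> finite B"
  unfolding is_basis_over_def using lin_indep_over_finite by blast

lemma ext_degree_self: "is_subfield P \<Longrightarrow> ext_degree P P = 1"
proof -
  assume P: "is_subfield P"
  have "is_basis_over P P {1}"
    unfolding is_basis_over_def lin_indep_over_def span_over_def using P by (auto simp: subfield_one)
  then show ?thesis using ext_degree_basis[OF P] by simp
qed

lemma ext_degree_pos: assumes "finite_ext E F" shows "ext_degree E F \<ge> 1"
proof -
  obtain B where B: "is_basis_over E F B" "ext_degree E F = card B" using finite_ext_basis[OF assms] by blast
  have "1 \<in> F" using assms subfield_one finite_extD by blast
  then have "B \<noteq> {}" using B(1) unfolding is_basis_over_def by (auto simp: span_over_empty)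
  then show ?thesis using B basis_over_finite[OF B(1)] by (simp add: Suc_le_eq card_gt_0_iff)
qed

lemma finite_ext_intermediate:
  assumes KP: "finite_ext K P" and E: "is_subfield E" "K \<subseteq> E" "E \<subseteq> P"
  shows "finite_ext K E" "finite_ext E P"
proof -
  obtain B where B: "is_basis_over K P B" using KP unfolding finite_ext_def by blast
  have K: "is_subfield K" and P: "is_subfield P" using KP finite_extD by auto
  have "E \<subseteq> span_over K B" using B E unfolding is_basis_over_def by auto
  then obtain C where "is_basis_over K E C"
    using basis_over_exists[OF K basis_over_finite[OF B] subfield_subspace_over[OF E(1,2)]] by blast
  then show "finite_ext K E" using K E unfolding finite_ext_def by blast
  have "P \<subseteq> span_over E B" using B span_over_mono_field[OF E(2)] unfolding is_basis_over_def by auto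
  then obtain C where "is_basis_over E P C"
    using basis_over_exists[OF E(1) basis_over_finite[OF B] subfield_subspace_over[OF P E(3)]] by blast
  then show "finite_ext E P" using P E unfolding finite_ext_def by blast
qed

lemma gen_field_basis:
  assumes KP: "finite_ext K P" and B: "is_basis_over K P B"
  shows "gen_field (K \<union> B) = P"
proof
  have P: "is_subfield P" and KsP: "K \<subseteq> P" using KP finite_extD by auto
  show "gen_field (K \<union> B) \<subseteq> P" using gen_field_least[OF P] KsP B unfolding is_basis_over_def by blast
  have "span_over K B \<subseteq> gen_field (K \<union> B)"
    using span_over_least[OF subfield_subspace_over[OF gen_field_subfield]] gen_field_superset[of "K \<union> B"]
    by blast
  then show "P \<subseteq> gen_field (K \<union> B)" using B unfolding is_basis_over_def by simp
qed

lemma lin_indep_products: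
  assumes B: "lin_indep_over E B" and C: "lin_indep_over K C" and CE: "span_over K C \<subseteq> E"
  shows "lin_indep_family K (B \<times> C) (\<lambda>(b, c). b * c)"
  unfolding lin_indep_family_def
proof (intro conjI allI impI)
  show "finite (B \<times> C)" using B C lin_indep_over_finite by blast
  fix d assume d: "(\<forall>i\<in>B \<times> C. d i \<in> K) \<and> (\<Sum>i\<in>B \<times> C. d i * (case i of (b, c) \<Rightarrow> b * c)) = 0"
  have "(\<Sum>b\<in>B. (\<Sum>c\<in>C. d (b, c) * c) * b) = (\<Sum>(b, c)\<in>B \<times> C. d (b, c) * (b * c))"
    by (simp add: sum.cartesian_product[symmetric] sum_distrib_left sum_distrib_right mult_ac)
  also have "\<dots> = 0" using d by (simp add: split_def)
  finally have z: "(\<Sum>b\<in>B. (\<Sum>c\<in>C. d (b, c) * c) * b) = 0" .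
  have "(\<Sum>c\<in>C. d (b, c) * c) \<in> E" if "b \<in> B" for b
    using span_overI[of C "\<lambda>c. d (b, c)" K] d that CE by auto
  then have "(\<Sum>c\<in>C. d (b, c) * c) = 0" if "b \<in> B" for b
    using lin_indep_overD[OF B, of "\<lambda>b. \<Sum>c\<in>C. d (b, c) * c" b] z that by blast
  then have "d (b, c) = 0" if "b \<in> B" "c \<in> C" for b c
    using lin_indep_overD[OF C(1), of "\<lambda>c. d (b, c)" c] d that by blast
  then show "\<forall>i\<in>B \<times> C. d i = 0" by blast
qed

lemma ext_degree_tower:
  assumes KP: "finite_ext K P" and E: "is_subfield E" "K \<subseteq> E" "E \<subseteq> P"
  shows "ext_degree K P = ext_degree E P * ext_degree K E"
proof -
  have K: "is_subfield K" and P: "is_subfield P" using KP finite_extD by auto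
  obtain B where B: "is_basis_over E P B" "ext_degree E P = card B"
    using finite_ext_basis[OF finite_ext_intermediate(2)[OF assms]] by blast
  obtain C where C: "is_basis_over K E C" "ext_degree K E = card C"
    using finite_ext_basis[OF finite_ext_intermediate(1)[OF assms]] by blast
  define f where "f = (\<lambda>(b::'a, c::'a). b * c)"
  have BP: "B \<subseteq> P" and CE: "C \<subseteq> E" using B(1) C(1) unfolding is_basis_over_def by auto
  have fi: "lin_indep_family K (B \<times> C) f"
    unfolding f_def using B(1) C(1) by (intro lin_indep_products[of E]) (simp_all add: is_basis_over_def)
  have inj: "inj_on f (B \<times> C)" using lin_indep_family_inj_on[OF K fi] .
  have fP: "f ` (B \<times> C) \<subseteq> P"
    using BP CE E(3) subfield_mult[OF P] unfolding f_def by (auto simp: subset_iff)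
  have "P \<subseteq> span_over K (f ` (B \<times> C))"
  proof
    fix x assume "x \<in> P"
    then obtain e where e: "\<And>b. b \<in> B \<Longrightarrow> e b \<in> E" "x = (\<Sum>b\<in>B. e b * b)"
      using B(1) unfolding is_basis_over_def span_over_def by blast
    have "\<forall>b\<in>B. \<exists>k. (\<forall>c\<in>C. k c \<in> K) \<and> e b = (\<Sum>c\<in>C. k c * c)"
      using e(1) C(1) unfolding is_basis_over_def span_over_def by blast
    then obtain k where k: "\<And>b c. b \<in> B \<Longrightarrow> c \<in> C \<Longrightarrow> k b c \<in> K"
      "\<And>b. b \<in> B \<Longrightarrow> e b = (\<Sum>c\<in>C. k b c * c)" by metis
    have "x = (\<Sum>b\<in>B. (\<Sum>c\<in>C. k b c * c) * b)" using e(2) k(2) by simp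
    also have "\<dots> = (\<Sum>(b, c)\<in>B \<times> C. k b c * (b * c))"
      by (simp add: sum.cartesian_product[symmetric] sum_distrib_left sum_distrib_right mult_ac)
    also have "\<dots> = (\<Sum>i\<in>B \<times> C. (case i of (b, c) \<Rightarrow> k b c) * f i)" by (simp add: f_def split_def)
    finally show "x \<in> span_over K (f ` (B \<times> C))"
      using span_over_family[OF inj, of "\<lambda>i. case i of (b, c) \<Rightarrow> k b c"] k(1) by auto
  qed
  moreover have "span_over K (f ` (B \<times> C)) \<subseteq> P"
    using span_over_least[OF subfield_subspace_over[OF P] fP] E(2,3) by blast
  ultimately have "is_basis_over K P (f ` (B \<times> C))"
    unfolding is_basis_over_def using lin_indep_family_image(1)[OF K fi] fP by blast
  then have "ext_degree K P = card (B \<times> C)"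
    using ext_degree_basis[OF K] lin_indep_family_image(2)[OF K fi] by simp
  then show ?thesis using B C by (simp add: card_cartesian_product)
qed

lemma ext_degree_one_imp_eq:
  assumes EP: "finite_ext E P" and d: "ext_degree E P = 1" shows "P = E"
proof -
  obtain B where B: "is_basis_over E P B" "card B = 1" using finite_ext_basis[OF EP] d by auto
  then obtain b where b: "B = {b}" using card_1_singletonE by blast
  have E: "is_subfield E" and P: "is_subfield P" and EsP: "E \<subseteq> P" using EP finite_extD by auto
  have Pb: "P = {c * b | c. c \<in> E}" using B(1) unfolding b is_basis_over_def span_over_def by auto
  obtain c where c: "c \<in> E" "1 = c * b" using Pb subfield_one[OF P] by blast
  have "inverse c = b" using c(2) by (intro inverse_unique) simp
  then have bE: "b \<in> E" using subfield_inverse[OF E c(1)] by simp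
  have "P \<subseteq> E" using Pb bE E by (auto intro: subfield_mult)
  then show ?thesis using EsP by blast
qed

context
  fixes E P :: "'a::field set"
  assumes EP: "finite_ext E P"
begin

lemma intermediate_eq_top:
  assumes E': "is_subfield E'" "E \<subseteq> E'" "E' \<subseteq> P" and d: "ext_degree E E' = ext_degree E P"
  shows "E' = P"
proof -
  have "ext_degree E P = ext_degree E' P * ext_degree E E'" using ext_degree_tower[OF EP E'] .
  moreover have "ext_degree E E' \<ge> 1" using ext_degree_pos[OF finite_ext_intermediate(1)[OF EP E']] .
  ultimately have "ext_degree E' P = 1" using d by simp
  then show ?thesis using ext_degree_one_imp_eq[OF finite_ext_intermediate(2)[OF EP E']] by simp
qed

lemma intermediate_eq_bottom:
  assumes E': "is_subfield E'" "E \<subseteq> E'" "E' \<subseteq> P" and d: "ext_degree E' P = ext_degree E P"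
  shows "E' = E"
proof -
  have "ext_degree E P = ext_degree E' P * ext_degree E E'" using ext_degree_tower[OF EP E'] .
  then have "ext_degree E E' = 1" using d ext_degree_pos[OF EP] by simp
  then show ?thesis using ext_degree_one_imp_eq[OF finite_ext_intermediate(1)[OF EP E']] by simp
qed

lemma ext_degree_le_intermediate:
  assumes E': "is_subfield E'" "E \<subseteq> E'" "E' \<subseteq> P"
  shows "ext_degree E' P \<le> ext_degree E P"
proof -
  have "ext_degree E P = ext_degree E' P * ext_degree E E'" using ext_degree_tower[OF EP E'] .
  moreover have "ext_degree E E' \<ge> 1" using ext_degree_pos[OF finite_ext_intermediate(1)[OF EP E']] .
  ultimately show ?thesis by simp
qed

end


section \<open>Minimal polynomials\<close>

definition alg_over :: "'a::field set \<Rightarrow> 'a \<Rightarrow> bool" where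
  "alg_over E x \<longleftrightarrow> (\<exists>p. p \<noteq> 0 \<and> poly_over E p \<and> poly p x = 0)"

lemma coeff_sum_monom: "finite A \<Longrightarrow> coeff (\<Sum>i\<in>A. monom (d i) i) j = (if j \<in> A then (d j::'a::field) else 0)"
  by (simp add: coeff_sum coeff_monom)

lemma poly_sum_monom: "poly (\<Sum>i\<in>A. monom (d i) i) x = (\<Sum>i\<in>A. d i * (x::'a::field) ^ i)"
  by (simp add: poly_sum poly_monom)

lemma degree_sum_monom_less:
  assumes "(\<Sum>i<n. monom (d i) i) \<noteq> 0"
  shows "degree (\<Sum>i<n. monom (d i :: 'a::field) i) < n"
proof -
  have "n \<noteq> 0" using assms by (intro notI) simp
  moreover have "degree (\<Sum>i<n. monom (d i) i) \<le> n - 1"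
    by (rule degree_le) (auto simp: coeff_sum_monom)
  ultimately show ?thesis by linarith
qed

lemma poly_eq_sum_lessThan:
  fixes p :: "'a::field poly"
  assumes "p = 0 \<or> degree p < n"
  shows "poly p x = (\<Sum>i<n. coeff p i * x ^ i)"
proof (cases "p = 0")
  case True then show ?thesis by simp
next
  case False
  then have dn: "degree p < n" using assms by simp
  have "poly p x = (\<Sum>i\<le>degree p. coeff p i * x ^ i)" by (rule poly_altdef)
  also have "\<dots> = (\<Sum>i<n. coeff p i * x ^ i)"
    by (rule sum.mono_neutral_left) (use dn in \<open>auto simp: coeff_eq_0\<close>)
  finally show ?thesis .
qed

lemma min_poly_props:
  assumes E: "is_subfield E" and a: "alg_over E x"
  shows "poly_over E (min_poly E x)" "lead_coeff (min_poly E x) = 1" "poly (min_poly E x) x = 0"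
    "\<And>q. q \<noteq> 0 \<Longrightarrow> poly_over E q \<Longrightarrow> poly q x = 0 \<Longrightarrow> degree (min_poly E x) \<le> degree q"
proof -
  define P where "P = (\<lambda>n. \<exists>q. q \<noteq> 0 \<and> poly_over E q \<and> poly q x = 0 \<and> degree q = n)"
  obtain q0 where "q0 \<noteq> 0 \<and> poly_over E q0 \<and> poly q0 x = 0" using a alg_over_def by blast
  then have "P (degree q0)" unfolding P_def by blast
  then have Pn: "P (LEAST n. P n)" by (rule LeastI)
  then obtain q where q: "q \<noteq> 0" "poly_over E q" "poly q x = 0" "degree q = (LEAST n. P n)"
    unfolding P_def by blast
  define p where "p = smult (inverse (lead_coeff q)) q"
  have p: "poly_over E p" "lead_coeff p = 1" "poly p x = 0" "degree p = degree q"
    unfolding p_def using q(1,3) poly_over_smult[OF E subfield_inverse[OF E poly_over_coeff[OF q(2)]] q(2)]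
    by auto
  have pmin: "\<forall>r. r \<noteq> 0 \<and> poly_over E r \<and> poly r x = 0 \<longrightarrow> degree p \<le> degree r"
  proof (intro allI impI)
    fix r assume "r \<noteq> 0 \<and> poly_over E r \<and> poly r x = 0"
    then have "P (degree r)" unfolding P_def by blast
    then have "(LEAST n. P n) \<le> degree r" by (rule Least_le)
    then show "degree p \<le> degree r" using p(4) q(4) by simp
  qed
  have ex: "\<exists>p. poly_over E p \<and> lead_coeff p = 1 \<and> poly p x = 0 \<and>
       (\<forall>q. q \<noteq> 0 \<and> poly_over E q \<and> poly q x = 0 \<longrightarrow> degree p \<le> degree q)"
    using p pmin by blast
  have "poly_over E (min_poly E x) \<and> lead_coeff (min_poly E x) = 1 \<and> poly (min_poly E x) x = 0 \<and>
       (\<forall>q. q \<noteq> 0 \<and> poly_over E q \<and> poly q x = 0 \<longrightarrow> degree (min_poly E x) \<le> degree q)"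
    unfolding min_poly_def by (rule someI_ex[OF ex])
  then show "poly_over E (min_poly E x)" "lead_coeff (min_poly E x) = 1" "poly (min_poly E x) x = 0"
    "\<And>q. q \<noteq> 0 \<Longrightarrow> poly_over E q \<Longrightarrow> poly q x = 0 \<Longrightarrow> degree (min_poly E x) \<le> degree q"
    by auto
qed

lemmas min_poly_over = min_poly_props(1)
  and min_poly_monic = min_poly_props(2)
  and min_poly_root = min_poly_props(3)
  and min_poly_minimal = min_poly_props(4)

lemma min_poly_nonzero: assumes "is_subfield E" "alg_over E x" shows "min_poly E x \<noteq> 0"
proof
  assume "min_poly E x = 0"
  then show False using min_poly_monic[OF assms] by simp
qed

lemma min_poly_degree_pos: assumes "is_subfield E" "alg_over E x" shows "degree (min_poly E x) \<ge> 1"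
proof (rule ccontr)
  assume "\<not> ?thesis"
  then have "degree (min_poly E x) = 0" by simp
  then have "min_poly E x = [:1:]" using min_poly_monic[OF assms] by (metis degree_0_id)
  then show False using min_poly_root[OF assms] by simp
qed

lemma monic_diff_degree:
  fixes p q :: "'a::field poly"
  assumes "lead_coeff p = 1" "lead_coeff q = 1" "degree p = degree q" "p \<noteq> q"
  shows "degree (p - q) < degree p"
proof -
  have "degree (p - q) \<le> degree p" by (rule degree_diff_le) (use assms(3) in auto)
  moreover have "coeff (p - q) (degree p) = 0" using assms by simp
  moreover have "p - q \<noteq> 0" using assms(4) by simp
  ultimately show ?thesis by (metis le_neq_implies_less leading_coeff_0_iff)
qed

lemma min_poly_unique:
  assumes E: "is_subfield E" and p: "poly_over E p" "lead_coeff p = 1" "poly p x = 0"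
    and pmin: "\<And>q. q \<noteq> 0 \<Longrightarrow> poly_over E q \<Longrightarrow> poly q x = 0 \<Longrightarrow> degree p \<le> degree q"
  shows "min_poly E x = p"
proof (rule ccontr)
  assume ne: "min_poly E x \<noteq> p"
  have a: "alg_over E x" unfolding alg_over_def using p by (intro exI[of _ p]) auto
  note m = min_poly_props[OF E a]
  have p0: "p \<noteq> 0" using p by auto
  have dd: "degree (min_poly E x) = degree p" using m(4)[OF p0 p(1,3)] pmin[OF min_poly_nonzero[OF E a] m(1,3)] by simp
  have "degree (min_poly E x - p) < degree (min_poly E x)"
    by (rule monic_diff_degree) (use m p dd ne in auto)
  moreover have "min_poly E x - p \<noteq> 0" using ne by simp
  moreover have "poly_over E (min_poly E x - p)" using m p E by (simp add: poly_over_diff)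
  moreover have "poly (min_poly E x - p) x = 0" using m p by simp
  ultimately show False using m(4)[of "min_poly E x - p"] by linarith
qed

lemma min_poly_dvd:
  assumes E: "is_subfield E" and a: "alg_over E x" and q: "poly_over E q" "poly q x = 0"
  shows "\<exists>s. poly_over E s \<and> q = min_poly E x * s"
proof -
  note m = min_poly_props[OF E a]
  define r where "r = q mod min_poly E x"
  have rE: "poly_over E r" unfolding r_def using poly_over_div_mod[OF E m(1) q(1)] by simp
  have qd: "q = (q div min_poly E x) * min_poly E x + r" unfolding r_def by (rule div_mult_mod_eq[symmetric])
  have "poly r x = 0" using q(2) m(3) qd by (metis add_0 mult_zero_right poly_add poly_mult)
  have "r = 0"
  proof (rule ccontr)
    assume "r \<noteq> 0"
    then have "degree r < degree (min_poly E x)" unfolding r_def using min_poly_nonzero[OF E a]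
      by (metis degree_mod_less)
    then show False using m(4)[OF \<open>r \<noteq> 0\<close> rE \<open>poly r x = 0\<close>] by simp
  qed
  then show ?thesis using qd poly_over_div_mod[OF E m(1) q(1)] by (intro exI[of _ "q div min_poly E x"]) (simp add: mult.commute)
qed

lemma min_poly_irreducible:
  assumes E: "is_subfield E" and a: "alg_over E x" and ab: "poly_over E a" "poly_over E b"
    and eq: "min_poly E x = a * b"
  shows "degree a = 0 \<or> degree b = 0"
proof -
  note m = min_poly_props[OF E a]
  have a0: "a \<noteq> 0" and b0: "b \<noteq> 0" using min_poly_nonzero[OF E a] eq by auto
  have dg: "degree (min_poly E x) = degree a + degree b" using eq a0 b0 by (simp add: degree_mult_eq)
  have "poly a x * poly b x = 0" using m(3) eq by simp
  then have "poly a x = 0 \<or> poly b x = 0" by simp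
  then show ?thesis
  proof
    assume "poly a x = 0"
    then have "degree (min_poly E x) \<le> degree a" using m(4)[OF a0 ab(1)] by simp
    then show ?thesis using dg by simp
  next
    assume "poly b x = 0"
    then have "degree (min_poly E x) \<le> degree b" using m(4)[OF b0 ab(2)] by simp
    then show ?thesis using dg by simp
  qed
qed

lemma min_poly_of_root:
  assumes E: "is_subfield E" and a: "alg_over E x" and r: "poly (min_poly E x) y = 0"
  shows "alg_over E y" "min_poly E y = min_poly E x"
proof -
  note m = min_poly_props[OF E a]
  show ay: "alg_over E y" unfolding alg_over_def using m r min_poly_nonzero[OF E a] by blast
  note my = min_poly_props[OF E ay]
  obtain s where s: "poly_over E s" "min_poly E x = min_poly E y * s" using min_poly_dvd[OF E ay m(1) r] by blast
  have "degree (min_poly E y) = 0 \<or> degree s = 0" using min_poly_irreducible[OF E a my(1) s(1) s(2)] .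
  then have "degree s = 0" using min_poly_degree_pos[OF E ay] by simp
  then obtain c where c: "s = [:c:]" by (metis degree_0_id)
  have "lead_coeff (min_poly E x) = lead_coeff (min_poly E y) * c" using s(2) c by (simp add: lead_coeff_mult)
  then have "c = 1" using m(2) my(2) by simp
  then show "min_poly E y = min_poly E x" using s(2) c by simp
qed

lemma powers_lin_indep:
  assumes E: "is_subfield E" and a: "alg_over E x"
  shows "lin_indep_family E {..<degree (min_poly E x)} (\<lambda>i. x ^ i)"
  unfolding lin_indep_family_def
proof (intro conjI allI impI)
  show "finite {..<degree (min_poly E x)}" by simp
  fix d assume d: "(\<forall>i\<in>{..<degree (min_poly E x)}. d i \<in> E) \<and> (\<Sum>i\<in>{..<degree (min_poly E x)}. d i * x ^ i) = 0"
  define n where "n = degree (min_poly E x)"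
  define p where "p = (\<Sum>i<n. monom (d i) i)"
  have pE: "poly_over E p" unfolding p_def using d E by (intro poly_over_sum_monom) (auto simp: n_def)
  have px: "poly p x = 0" unfolding p_def poly_sum_monom using d by (simp add: n_def)
  have "p = 0"
  proof (rule ccontr)
    assume "p \<noteq> 0"
    then have "degree p < n" unfolding p_def by (rule degree_sum_monom_less)
    then show False using min_poly_minimal[OF E a \<open>p \<noteq> 0\<close> pE px] n_def by simp
  qed
  show "\<forall>i\<in>{..<degree (min_poly E x)}. d i = 0"
  proof
    fix i assume i: "i \<in> {..<degree (min_poly E x)}"
    have "coeff p i = d i" unfolding p_def using i by (simp add: coeff_sum_monom n_def)
    then show "d i = 0" using \<open>p = 0\<close> by simp
  qed
qed

lemma alg_over_finite_ext:
  assumes EP: "finite_ext E P" and x: "x \<in> P" shows "alg_over E x"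
proof -
  have E: "is_subfield E" and P: "is_subfield P" using EP finite_extD by auto
  obtain B where B: "is_basis_over E P B" using EP finite_ext_def by blast
  define n where "n = ext_degree E P"
  have "\<not> lin_indep_family E {..n} (\<lambda>i. x ^ i)"
  proof
    assume fi: "lin_indep_family E {..n} (\<lambda>i. x ^ i)"
    have "(\<lambda>i. x ^ i) ` {..n} \<subseteq> P" using x P by (auto intro: subfield_power)
    then have "card ((\<lambda>i. x ^ i) ` {..n}) \<le> n"
      using card_lin_indep_le_ext_degree[OF E B] lin_indep_family_image(1)[OF E fi] n_def by blast
    then show False using lin_indep_family_image(2)[OF E fi] by simp
  qed
  then have "\<exists>d. (\<forall>i\<in>{..n}. d i \<in> E) \<and> (\<Sum>i\<in>{..n}. d i * x ^ i) = 0 \<and> \<not> (\<forall>i\<in>{..n}. d i = 0)"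
    unfolding lin_indep_family_def by simp
  then obtain d i where d: "\<forall>i\<in>{..n}. d i \<in> E" "(\<Sum>i\<in>{..n}. d i * x ^ i) = 0" "i \<in> {..n}" "d i \<noteq> 0"
    by blast
  define p where "p = (\<Sum>i\<in>{..n}. monom (d i) i)"
  have "coeff p i = d i" unfolding p_def using d(3) by (simp add: coeff_sum_monom)
  then have "p \<noteq> 0" using d(4) by auto
  moreover have "poly_over E p" unfolding p_def using d E by (intro poly_over_sum_monom) auto
  moreover have "poly p x = 0" unfolding p_def poly_sum_monom using d by simp
  ultimately show ?thesis unfolding alg_over_def by blast
qed


section \<open>Simple algebraic extensions\<close>

lemma poly_image_mem: "poly_over E p \<Longrightarrow> poly p x \<in> {poly p x | p. poly_over E p}"
  by blast

context
  fixes E :: "'a::field set" and x :: 'a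
  assumes E: "is_subfield E" and a: "alg_over E x"
begin

lemma span_powers_eq_poly_image:
  "span_over E ((\<lambda>i. x ^ i) ` {..<degree (min_poly E x)}) = {poly p x | p. poly_over E p}"
    (is "span_over E ?W = ?V")
proof
  define d where "d = degree (min_poly E x)"
  have inj: "inj_on (\<lambda>i. x ^ i) {..<d}"
    unfolding d_def by (rule lin_indep_family_inj_on[OF E powers_lin_indep[OF E a]])
  show "span_over E ?W \<subseteq> ?V"
  proof
    fix y assume "y \<in> span_over E ?W"
    then obtain c where c: "\<And>v. v \<in> ?W \<Longrightarrow> c v \<in> E" "y = (\<Sum>v\<in>?W. c v * v)"
      unfolding span_over_def by blast
    have "y = (\<Sum>i<d. c (x ^ i) * x ^ i)"
      unfolding c(2) d_def using sum.reindex[OF inj[unfolded d_def], of "\<lambda>v. c v * v"] by simp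
    also have "\<dots> = poly (\<Sum>i<d. monom (c (x ^ i)) i) x" by (simp add: poly_sum_monom)
    finally show "y \<in> ?V" using poly_over_sum_monom[OF E, of "{..<d}" "\<lambda>i. c (x ^ i)"] c(1)
      unfolding d_def by auto
  qed
  show "?V \<subseteq> span_over E ?W"
  proof
    fix y assume "y \<in> ?V"
    then obtain p where p: "poly_over E p" "y = poly p x" by blast
    define r where "r = p mod min_poly E x"
    have rE: "poly_over E r" unfolding r_def using poly_over_div_mod[OF E min_poly_over[OF E a] p(1)] by simp
    have "p = (p div min_poly E x) * min_poly E x + r" unfolding r_def by (rule div_mult_mod_eq[symmetric])
    then have "poly p x = poly r x" using min_poly_root[OF E a] by (metis add_0 mult_zero_right poly_add poly_mult)
    also have "\<dots> = (\<Sum>i<d. coeff r i * x ^ i)"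
      by (rule poly_eq_sum_lessThan)
        (use degree_mod_less[OF min_poly_nonzero[OF E a], of p] in \<open>simp add: r_def d_def\<close>)
    finally show "y \<in> span_over E ?W"
      using p span_over_family[OF inj, of "\<lambda>i. coeff r i"] rE by (simp add: poly_over_coeff d_def)
  qed
qed

lemma basis_powers:
  "is_basis_over E {poly p x | p. poly_over E p} ((\<lambda>i. x ^ i) ` {..<degree (min_poly E x)})"
proof -
  have "x ^ i \<in> {poly p x | p. poly_over E p}" for i
    using poly_image_mem[OF poly_over_monom[OF E subfield_one[OF E], of i]] by (simp add: poly_monom)
  then show ?thesis
    unfolding is_basis_over_def
    using span_powers_eq_poly_image lin_indep_family_image(1)[OF E powers_lin_indep[OF E a]] by blast
qed

lemma ext_degree_poly_image: "ext_degree E {poly p x | p. poly_over E p} = degree (min_poly E x)"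
  using ext_degree_basis[OF E basis_powers] lin_indep_family_image(2)[OF E powers_lin_indep[OF E a]] by simp

text \<open>Multiplication by \<open>y \<noteq> 0\<close> maps the basis of powers of \<open>x\<close> to an independent set of the
  same size, hence to a basis; writing \<open>1\<close> in it exhibits the inverse of \<open>y\<close>.\<close>

lemma poly_image_inverse:
  assumes y: "y \<in> {poly p x | p. poly_over E p}"
  shows "inverse y \<in> {poly p x | p. poly_over E p}" (is "_ \<in> ?V")
proof (cases "y = 0")
  case True then show ?thesis using poly_image_mem[OF poly_over_0[OF E]] by simp
next
  case False
  let ?d = "degree (min_poly E x)"
  have fi: "lin_indep_family E {..<?d} (\<lambda>i. x ^ i)" by (rule powers_lin_indep[OF E a])
  have inj: "inj_on (\<lambda>i. x ^ i) {..<?d}" by (rule lin_indep_family_inj_on[OF E fi])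
  have fy: "lin_indep_family E {..<?d} (\<lambda>i. y * x ^ i)"
    unfolding lin_indep_family_def
  proof (intro conjI allI impI)
    fix c assume c: "(\<forall>i\<in>{..<?d}. c i \<in> E) \<and> (\<Sum>i\<in>{..<?d}. c i * (y * x ^ i)) = 0"
    then have "y * (\<Sum>i\<in>{..<?d}. c i * x ^ i) = 0" by (simp add: sum_distrib_left mult_ac)
    then show "\<forall>i\<in>{..<?d}. c i = 0" using lin_indep_familyD[OF fi, of c] c False by simp
  qed simp
  obtain p where p: "poly_over E p" "y = poly p x" using y by blast
  have "y * x ^ i \<in> ?V" for i
    using p poly_image_mem[OF poly_over_mult[OF E p(1) poly_over_monom[OF E subfield_one[OF E]]], of i]
    by (simp add: poly_monom)
  then have "(\<lambda>i. y * x ^ i) ` {..<?d} \<subseteq> ?V" by blast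
  moreover have "card ((\<lambda>i. y * x ^ i) ` {..<?d}) = ext_degree E ?V"
    using lin_indep_family_image(2)[OF E fy] ext_degree_poly_image by simp
  ultimately have "is_basis_over E ?V ((\<lambda>i. y * x ^ i) ` {..<?d})"
    by (rule basis_over_of_card_eq[OF E basis_powers _ lin_indep_family_image(1)[OF E fy]])
  moreover have "1 \<in> ?V" using poly_image_mem[OF poly_over_1[OF E]] by simp
  ultimately have "1 \<in> span_over E ((\<lambda>i. y * x ^ i) ` {..<?d})" unfolding is_basis_over_def by simp
  then obtain c' where c': "\<And>v. v \<in> (\<lambda>i. y * x ^ i) ` {..<?d} \<Longrightarrow> c' v \<in> E"
    "1 = (\<Sum>v\<in>(\<lambda>i. y * x ^ i) ` {..<?d}. c' v * v)"
    unfolding span_over_def by blast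
  define c where "c = (\<lambda>i. c' (y * x ^ i))"
  have cE: "c i \<in> E" if "i < ?d" for i
    using c'(1)[of "y * x ^ i"] that unfolding c_def by blast
  have one: "1 = (\<Sum>i<?d. c i * (y * x ^ i))"
    using c'(2) sum.reindex[OF lin_indep_family_inj_on[OF E fy], of "\<lambda>v. c' v * v"] by (simp add: c_def)
  have "inverse y = (\<Sum>i<?d. c i * x ^ i)"
    using one by (intro inverse_unique) (simp add: sum_distrib_left mult_ac)
  moreover have "(\<Sum>i<?d. c i * x ^ i) \<in> span_over E ((\<lambda>i. x ^ i) ` {..<?d})"
    using span_over_family[OF inj] cE by simp
  ultimately show ?thesis using span_powers_eq_poly_image by simp
qed

lemma poly_image_subfield: "is_subfield {poly p x | p. poly_over E p}" (is "is_subfield ?V")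
proof -
  have "y + z \<in> ?V \<and> y - z \<in> ?V \<and> y * z \<in> ?V" if yz: "y \<in> ?V" "z \<in> ?V" for y z
  proof -
    obtain p q where "poly_over E p" "y = poly p x" "poly_over E q" "z = poly q x" using yz by blast
    then show ?thesis
      using poly_image_mem[OF poly_over_add[OF E], of p q] poly_image_mem[OF poly_over_diff[OF E], of p q]
        poly_image_mem[OF poly_over_mult[OF E], of p q] by simp
  qed
  moreover have "0 \<in> ?V" "1 \<in> ?V"
    using poly_image_mem[OF poly_over_0[OF E]] poly_image_mem[OF poly_over_1[OF E]] by simp_all
  ultimately show ?thesis unfolding is_subfield_def using poly_image_inverse by blast
qed

lemma insert_subset_poly_image: "insert x E \<subseteq> {poly p x | p. poly_over E p}"
  using poly_image_mem[OF poly_over_const[OF E]] poly_image_mem[OF poly_over_monom[OF E subfield_one[OF E], of 1]]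
  by (auto simp: poly_monom)

lemma gen_field_insert_eq_poly_image: "gen_field (insert x E) = {poly p x | p. poly_over E p}"
  (is "_ = ?V")
proof
  have "is_subfield ?V" by (rule poly_image_subfield)
  moreover note insert_subset_poly_image
  ultimately show "gen_field (insert x E) \<subseteq> ?V" by (rule gen_field_least)
  show "?V \<subseteq> gen_field (insert x E)"
    using poly_in_subfield[OF gen_field_subfield] poly_over_mono gen_field_superset[of "insert x E"] by blast
qed

lemma finite_ext_simple: "finite_ext E (gen_field (insert x E))"
  unfolding finite_ext_def gen_field_insert_eq_poly_image
  using E poly_image_subfield insert_subset_poly_image basis_powers by blast

lemma ext_degree_simple: "ext_degree E (gen_field (insert x E)) = degree (min_poly E x)"
  using gen_field_insert_eq_poly_image ext_degree_poly_image by simp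

end


section \<open>Homomorphisms\<close>

definition hom_on :: "'a::field set \<Rightarrow> ('a \<Rightarrow> 'a) \<Rightarrow> bool" where
  "hom_on P \<sigma> \<longleftrightarrow> \<sigma> 1 = 1 \<and> (\<forall>x\<in>P. \<forall>y\<in>P. \<sigma> (x + y) = \<sigma> x + \<sigma> y \<and> \<sigma> (x * y) = \<sigma> x * \<sigma> y)"

lemma is_embedding_iff_hom_on: "is_embedding E P \<sigma> \<longleftrightarrow> hom_on P \<sigma> \<and> (\<forall>x\<in>E. \<sigma> x = x)"
  unfolding is_embedding_def hom_on_def by auto

context
  fixes P :: "'a::field set" and \<sigma> :: "'a \<Rightarrow> 'a"
  assumes P: "is_subfield P" and h: "hom_on P \<sigma>"
begin

lemma hom_add: "x \<in> P \<Longrightarrow> y \<in> P \<Longrightarrow> \<sigma> (x + y) = \<sigma> x + \<sigma> y"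
  and hom_mult: "x \<in> P \<Longrightarrow> y \<in> P \<Longrightarrow> \<sigma> (x * y) = \<sigma> x * \<sigma> y"
  and hom_one: "\<sigma> 1 = 1"
  using h by (simp_all add: hom_on_def)

lemma hom_zero: "\<sigma> 0 = 0"
proof -
  have "\<sigma> 0 + \<sigma> 0 = \<sigma> 0 + 0" using hom_add[OF subfield_zero[OF P] subfield_zero[OF P]] by simp
  then show ?thesis by (rule add_left_imp_eq)
qed

lemma hom_uminus: "x \<in> P \<Longrightarrow> \<sigma> (- x) = - \<sigma> x"
proof -
  assume x: "x \<in> P"
  have "\<sigma> x + \<sigma> (- x) = 0" using hom_add[OF x subfield_uminus[OF P x]] hom_zero by simp
  then show ?thesis by (metis minus_unique)
qed

lemma hom_diff: "x \<in> P \<Longrightarrow> y \<in> P \<Longrightarrow> \<sigma> (x - y) = \<sigma> x - \<sigma> y"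
  using hom_add[of x "- y"] hom_uminus[of y] subfield_uminus[OF P] by simp

lemma hom_inverse: "x \<in> P \<Longrightarrow> \<sigma> (inverse x) = inverse (\<sigma> x)"
proof (cases "x = 0")
  case True then show ?thesis using hom_zero by simp
next
  case False
  assume x: "x \<in> P"
  have "\<sigma> x * \<sigma> (inverse x) = 1" using hom_mult[OF x subfield_inverse[OF P x]] False hom_one by simp
  then show ?thesis by (metis inverse_unique)
qed

lemma hom_power: "x \<in> P \<Longrightarrow> \<sigma> (x ^ n) = \<sigma> x ^ n"
  by (induction n) (auto simp: hom_one hom_mult subfield_power[OF P])

lemma hom_sum: "(\<And>i. i \<in> A \<Longrightarrow> f i \<in> P) \<Longrightarrow> \<sigma> (sum f A) = (\<Sum>i\<in>A. \<sigma> (f i))"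
  by (induction A rule: infinite_finite_induct) (auto simp: hom_zero hom_add subfield_sum[OF P])

lemma hom_inj: "inj_on \<sigma> P"
proof (rule inj_onI)
  fix x y assume xy: "x \<in> P" "y \<in> P" "\<sigma> x = \<sigma> y"
  then have d: "\<sigma> (x - y) = 0" using hom_diff by simp
  show "x = y"
  proof (rule ccontr)
    assume "x \<noteq> y"
    then have "\<sigma> ((x - y) * inverse (x - y)) = 1" using hom_one by simp
    then have "\<sigma> (x - y) * \<sigma> (inverse (x - y)) = 1"
      using hom_mult subfield_diff[OF P xy(1,2)] subfield_inverse[OF P] by metis
    then show False using d by simp
  qed
qed

lemma hom_image_subfield: "is_subfield (\<sigma> ` P)"
  unfolding is_subfield_def
proof (intro conjI ballI)
  show "0 \<in> \<sigma> ` P" using hom_zero subfield_zero[OF P] by (metis image_eqI)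
  show "1 \<in> \<sigma> ` P" using hom_one subfield_one[OF P] by (metis image_eqI)
  fix x y assume "x \<in> \<sigma> ` P" "y \<in> \<sigma> ` P"
  then obtain a b where ab: "a \<in> P" "b \<in> P" "x = \<sigma> a" "y = \<sigma> b" by blast
  show "x + y \<in> \<sigma> ` P" using ab hom_add subfield_add[OF P] by (metis image_eqI)
  show "x - y \<in> \<sigma> ` P" using ab hom_diff subfield_diff[OF P] by (metis image_eqI)
  show "x * y \<in> \<sigma> ` P" using ab hom_mult subfield_mult[OF P] by (metis image_eqI)
next
  fix x assume "x \<in> \<sigma> ` P"
  then obtain a where a: "a \<in> P" "x = \<sigma> a" by blast
  show "inverse x \<in> \<sigma> ` P" using a hom_inverse subfield_inverse[OF P] by (metis image_eqI)
qed

lemma coeff_map_hom: "coeff (map_poly \<sigma> p) n = \<sigma> (coeff p n)"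
  by (rule coeff_map_poly) (rule hom_zero)

lemma map_hom_add: "poly_over P p \<Longrightarrow> poly_over P q \<Longrightarrow> map_poly \<sigma> (p + q) = map_poly \<sigma> p + map_poly \<sigma> q"
  by (rule poly_eqI) (simp add: coeff_map_hom hom_add poly_over_coeff)

lemma map_hom_diff: "poly_over P p \<Longrightarrow> poly_over P q \<Longrightarrow> map_poly \<sigma> (p - q) = map_poly \<sigma> p - map_poly \<sigma> q"
  by (rule poly_eqI) (simp add: coeff_map_hom hom_diff poly_over_coeff)

lemma map_hom_mult: "poly_over P p \<Longrightarrow> poly_over P q \<Longrightarrow> map_poly \<sigma> (p * q) = map_poly \<sigma> p * map_poly \<sigma> q"
proof (rule poly_eqI)
  fix n assume p: "poly_over P p" and q: "poly_over P q"
  have "coeff (map_poly \<sigma> (p * q)) n = \<sigma> (\<Sum>i\<le>n. coeff p i * coeff q (n - i))"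
    by (simp add: coeff_map_hom coeff_mult)
  also have "\<dots> = (\<Sum>i\<le>n. \<sigma> (coeff p i) * \<sigma> (coeff q (n - i)))"
    using p q by (simp add: hom_sum hom_mult poly_over_coeff subfield_mult[OF P])
  also have "\<dots> = coeff (map_poly \<sigma> p * map_poly \<sigma> q) n" by (simp add: coeff_mult coeff_map_hom)
  finally show "coeff (map_poly \<sigma> (p * q)) n = coeff (map_poly \<sigma> p * map_poly \<sigma> q) n" .
qed

lemma map_hom_const: "map_poly \<sigma> [:c:] = [:\<sigma> c:]"
  by (rule poly_eqI) (simp add: coeff_map_hom coeff_pCons hom_zero split: nat.splits)

lemma map_hom_X: "map_poly \<sigma> [:0, 1:] = [:0, 1:]"
  by (rule poly_eqI) (simp add: coeff_map_hom coeff_pCons hom_zero hom_one split: nat.splits)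

lemma map_hom_eval: "poly_over P p \<Longrightarrow> x \<in> P \<Longrightarrow> \<sigma> (poly p x) = poly (map_poly \<sigma> p) (\<sigma> x)"
proof -
  assume p: "poly_over P p" and x: "x \<in> P"
  have "\<sigma> (poly p x) = \<sigma> (\<Sum>i\<le>degree p. coeff p i * x ^ i)" by (simp add: poly_altdef)
  also have "\<dots> = (\<Sum>i\<le>degree p. \<sigma> (coeff p i) * \<sigma> x ^ i)"
    using p x by (simp add: hom_sum hom_mult hom_power poly_over_coeff subfield_mult[OF P] subfield_power[OF P])
  also have "\<dots> = (\<Sum>i\<le>degree p. coeff (map_poly \<sigma> p) i * \<sigma> x ^ i)" by (simp add: coeff_map_hom)
  also have "\<dots> = (\<Sum>i<Suc (degree p). coeff (map_poly \<sigma> p) i * \<sigma> x ^ i)"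
    by (simp only: lessThan_Suc_atMost)
  also have "\<dots> = poly (map_poly \<sigma> p) (\<sigma> x)"
  proof (rule poly_eq_sum_lessThan[symmetric])
    have "degree (map_poly \<sigma> p) \<le> degree p"
      by (rule degree_le) (auto simp: coeff_map_hom coeff_eq_0 hom_zero)
    then show "map_poly \<sigma> p = 0 \<or> degree (map_poly \<sigma> p) < Suc (degree p)" by simp
  qed
  finally show ?thesis .
qed

lemma map_poly_linear: "a \<in> P \<Longrightarrow> map_poly \<sigma> [:- a, 1:] = [:- \<sigma> a, 1:]"
  using hom_zero hom_one hom_uminus by (simp add: map_poly_pCons)

lemma map_hom_prod:
  "(\<And>i. i \<in> A \<Longrightarrow> poly_over P (f i)) \<Longrightarrow> map_poly \<sigma> (\<Prod>i\<in>A. f i) = (\<Prod>i\<in>A. map_poly \<sigma> (f i))"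
proof (induction A rule: infinite_finite_induct)
  case (insert i A)
  then show ?case by (simp add: map_hom_mult poly_over_prod[OF P])
qed (use map_hom_const[of 1] hom_one in \<open>simp_all add: one_pCons\<close>)

lemma poly_over_map_poly: "poly_over P p \<Longrightarrow> poly_over (\<sigma> ` P) (map_poly \<sigma> p)"
  unfolding poly_over_def by (simp add: coeff_map_hom)

end

lemma map_poly_fixed: "is_subfield E \<Longrightarrow> poly_over E p \<Longrightarrow> (\<forall>x\<in>E. \<sigma> x = x) \<Longrightarrow> map_poly \<sigma> p = p"
proof -
  assume E: "is_subfield E" and p: "poly_over E p" and f: "\<forall>x\<in>E. \<sigma> x = x"
  have z: "\<sigma> 0 = 0" using f subfield_zero[OF E] by blast
  show ?thesis by (rule poly_eqI) (simp add: coeff_map_poly[of \<sigma>, OF z] f poly_over_coeff[OF p])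
qed

lemma hom_on_mono: "hom_on P \<sigma> \<Longrightarrow> Q \<subseteq> P \<Longrightarrow> hom_on Q \<sigma>"
  unfolding hom_on_def by blast

lemma hom_on_id: "hom_on P (\<lambda>x. x)" unfolding hom_on_def by simp

lemma map_poly_eval_eq_if_eval_eq:
  assumes E: "is_subfield E" and a: "alg_over E x" and h: "hom_on E \<sigma>"
    and b: "poly (map_poly \<sigma> (min_poly E x)) \<beta> = 0"
    and pq: "poly_over E p" "poly_over E q" "poly p x = poly q x"
  shows "poly (map_poly \<sigma> p) \<beta> = poly (map_poly \<sigma> q) \<beta>"
proof -
  obtain s where s: "poly_over E s" "p - q = min_poly E x * s"
    using min_poly_dvd[OF E a poly_over_diff[OF E pq(1,2)]] pq(3) by auto
  have "map_poly \<sigma> p - map_poly \<sigma> q = map_poly \<sigma> (p - q)" using map_hom_diff[OF E h pq(1,2)] by simp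
  also have "\<dots> = map_poly \<sigma> (min_poly E x) * map_poly \<sigma> s"
    using s map_hom_mult[OF E h min_poly_over[OF E a] s(1)] by simp
  finally have "poly (map_poly \<sigma> p - map_poly \<sigma> q) \<beta> = 0" using b by simp
  then show ?thesis by simp
qed

lemma extend_hom_simple:
  assumes E: "is_subfield E" and a: "alg_over E x" and h: "hom_on E \<sigma>"
    and b: "poly (map_poly \<sigma> (min_poly E x)) \<beta> = 0"
  defines "G \<equiv> gen_field (insert x E)"
  shows "\<exists>\<tau>. hom_on G \<tau> \<and> (\<forall>e\<in>E. \<tau> e = \<sigma> e) \<and> \<tau> x = \<beta> \<and> (\<forall>y. y \<notin> G \<longrightarrow> \<tau> y = y) \<and>
            (\<forall>p. poly_over E p \<longrightarrow> \<tau> (poly p x) = poly (map_poly \<sigma> p) \<beta>)"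
proof -
  have G: "G = {poly p x | p. poly_over E p}" unfolding G_def by (rule gen_field_insert_eq_poly_image[OF E a])
  define \<tau> where "\<tau> = (\<lambda>y. if y \<in> G then poly (map_poly \<sigma> (SOME p. poly_over E p \<and> y = poly p x)) \<beta> else y)"
  have tp: "\<tau> (poly p x) = poly (map_poly \<sigma> p) \<beta>" if p: "poly_over E p" for p
  proof -
    have ex: "\<exists>q. poly_over E q \<and> poly p x = poly q x" using p by blast
    define q where "q = (SOME q. poly_over E q \<and> poly p x = poly q x)"
    have q: "poly_over E q \<and> poly p x = poly q x" unfolding q_def by (rule someI_ex[OF ex])
    have "poly p x \<in> G" using G p by blast
    then have "\<tau> (poly p x) = poly (map_poly \<sigma> q) \<beta>" unfolding \<tau>_def q_def by simp
    also have "\<dots> = poly (map_poly \<sigma> p) \<beta>" using map_poly_eval_eq_if_eval_eq[OF E a h b _ p] q by simp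
    finally show ?thesis .
  qed
  have hom: "hom_on G \<tau>"
    unfolding hom_on_def
  proof (intro conjI ballI)
    have "\<tau> (poly 1 x) = poly (map_poly \<sigma> 1) \<beta>" using tp[OF poly_over_1[OF E]] .
    then show "\<tau> 1 = 1" using map_hom_const[OF E h, of 1] hom_one[OF E h] by (simp add: one_pCons)
    fix y z assume "y \<in> G" "z \<in> G"
    then obtain p q where pq: "poly_over E p" "y = poly p x" "poly_over E q" "z = poly q x"
      using G by blast
    show "\<tau> (y + z) = \<tau> y + \<tau> z"
      using tp[OF poly_over_add[OF E pq(1,3)]] tp[OF pq(1)] tp[OF pq(3)] map_hom_add[OF E h pq(1,3)] pq by simp
    show "\<tau> (y * z) = \<tau> y * \<tau> z"
      using tp[OF poly_over_mult[OF E pq(1,3)]] tp[OF pq(1)] tp[OF pq(3)] map_hom_mult[OF E h pq(1,3)] pq by simp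
  qed
  have te: "\<tau> e = \<sigma> e" if e: "e \<in> E" for e
    using tp[OF poly_over_const[OF E e]] map_hom_const[OF E h, of e] by simp
  have tx: "\<tau> x = \<beta>"
  proof -
    have "poly_over E [:0, 1:]" by (simp add: poly_over_pCons[OF E] poly_over_const[OF E] subfield_zero[OF E] subfield_one[OF E])
    then have "\<tau> (poly [:0, 1:] x) = poly (map_poly \<sigma> [:0, 1:]) \<beta>" by (rule tp)
    then show ?thesis using map_hom_X[OF E h] by simp
  qed
  have tout: "\<forall>y. y \<notin> G \<longrightarrow> \<tau> y = y" unfolding \<tau>_def by simp
  show ?thesis using hom te tx tout tp by blast
qed



section \<open>Automorphisms\<close>

lemma AutD:
  assumes "\<sigma> \<in> Aut E P"
  shows "hom_on P \<sigma>" "\<And>x. x \<in> E \<Longrightarrow> \<sigma> x = x" "\<sigma> ` P = P" "\<And>y. y \<notin> P \<Longrightarrow> \<sigma> y = y"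
  using assms unfolding Aut_def is_embedding_iff_hom_on by auto

lemma AutI:
  "hom_on P \<sigma> \<Longrightarrow> (\<And>x. x \<in> E \<Longrightarrow> \<sigma> x = x) \<Longrightarrow> \<sigma> ` P = P \<Longrightarrow> (\<And>y. y \<notin> P \<Longrightarrow> \<sigma> y = y) \<Longrightarrow> \<sigma> \<in> Aut E P"
  unfolding Aut_def is_embedding_iff_hom_on by auto

lemma Aut_id: "(\<lambda>x. x) \<in> Aut E P"
  by (rule AutI) (auto simp: hom_on_id)

lemma Aut_mem: "\<sigma> \<in> Aut E P \<Longrightarrow> y \<in> P \<Longrightarrow> \<sigma> y \<in> P"
  using AutD(3) by blast

lemma Aut_comp:
  assumes P: "is_subfield P" and s: "\<sigma> \<in> Aut E P" and t: "\<tau> \<in> Aut E P"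
  shows "\<sigma> \<circ> \<tau> \<in> Aut E P"
proof (rule AutI)
  show "hom_on P (\<sigma> \<circ> \<tau>)" unfolding hom_on_def
    using hom_add[OF P AutD(1)[OF s]] hom_mult[OF P AutD(1)[OF s]] hom_add[OF P AutD(1)[OF t]]
      hom_mult[OF P AutD(1)[OF t]] hom_one[OF P AutD(1)[OF s]] hom_one[OF P AutD(1)[OF t]]
      Aut_mem[OF t] by simp
  show "\<And>x. x \<in> E \<Longrightarrow> (\<sigma> \<circ> \<tau>) x = x" using AutD(2)[OF s] AutD(2)[OF t] by simp
  show "(\<sigma> \<circ> \<tau>) ` P = P" using AutD(3)[OF s] AutD(3)[OF t] by (metis image_comp)
  show "\<And>y. y \<notin> P \<Longrightarrow> (\<sigma> \<circ> \<tau>) y = y" using AutD(4)[OF s] AutD(4)[OF t] by simp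
qed

lemma Aut_comp_inj:
  assumes P: "is_subfield P" and s: "\<sigma> \<in> Aut E P"
  shows "inj_on (\<lambda>\<tau>. \<sigma> \<circ> \<tau>) (Aut E P)"
proof (rule inj_onI)
  fix t1 t2 assume t: "t1 \<in> Aut E P" "t2 \<in> Aut E P" "\<sigma> \<circ> t1 = \<sigma> \<circ> t2"
  show "t1 = t2"
  proof
    fix y show "t1 y = t2 y"
    proof (cases "y \<in> P")
      case True
      have "\<sigma> (t1 y) = \<sigma> (t2 y)" using t(3) by (metis comp_apply)
      then show ?thesis
        using inj_onD[OF hom_inj[OF P AutD(1)[OF s]]] Aut_mem[OF t(1) True] Aut_mem[OF t(2) True] by blast
    next
      case False then show ?thesis using AutD(4)[OF t(1)] AutD(4)[OF t(2)] by simp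
    qed
  qed
qed

lemma Aut_eval:
  assumes P: "is_subfield P" and s: "\<sigma> \<in> Aut E P" and E: "is_subfield E" "E \<subseteq> P"
    and p: "poly_over E p" and x: "x \<in> P"
  shows "\<sigma> (poly p x) = poly p (\<sigma> x)"
proof -
  have "\<sigma> (poly p x) = poly (map_poly \<sigma> p) (\<sigma> x)"
    using map_hom_eval[OF P AutD(1)[OF s] poly_over_mono[OF p E(2)] x] .
  also have "map_poly \<sigma> p = p" using map_poly_fixed[OF E(1) p] AutD(2)[OF s] by blast
  finally show ?thesis .
qed

locale simple_extension =
  fixes E P :: "'a::field set" and \<theta> :: 'a
  assumes E: "is_subfield E" and alg: "alg_over E \<theta>" and Pdef: "P = gen_field (insert \<theta> E)"
begin

lemma P_subfield: "is_subfield P"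
  using Pdef gen_field_subfield by simp

lemma E_subset_P: "E \<subseteq> P" and gen_in_P: "\<theta> \<in> P"
  using Pdef gen_field_superset by blast+

lemma P_eq_poly_image: "P = {poly p \<theta> | p. poly_over E p}"
  using gen_field_insert_eq_poly_image[OF E alg] Pdef by simp

lemma finite_ext_E_P: "finite_ext E P"
  using finite_ext_simple[OF E alg] Pdef by simp

lemma ext_degree_E_P: "ext_degree E P = degree (min_poly E \<theta>)"
  using ext_degree_simple[OF E alg] Pdef by simp

lemma Aut_root: "\<sigma> \<in> Aut E P \<Longrightarrow> poly (min_poly E \<theta>) (\<sigma> \<theta>) = 0"
  using Aut_eval[OF P_subfield _ E E_subset_P min_poly_over[OF E alg] gen_in_P] min_poly_root[OF E alg]
    hom_zero[OF P_subfield AutD(1)] by metis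

lemma Aut_eqI:
  assumes s: "\<sigma> \<in> Aut E P" and t: "\<tau> \<in> Aut E P" and eq: "\<sigma> \<theta> = \<tau> \<theta>"
  shows "\<sigma> = \<tau>"
proof
  fix y show "\<sigma> y = \<tau> y"
  proof (cases "y \<in> P")
    case True
    then obtain p where p: "poly_over E p" "y = poly p \<theta>" using P_eq_poly_image by blast
    show ?thesis
      using Aut_eval[OF P_subfield s E E_subset_P p(1) gen_in_P] Aut_eval[OF P_subfield t E E_subset_P p(1) gen_in_P]
        eq p(2) by simp
  next
    case False then show ?thesis using AutD(4)[OF s] AutD(4)[OF t] by simp
  qed
qed

lemma inj_on_Aut_eval: "inj_on (\<lambda>\<sigma>. \<sigma> \<theta>) (Aut E P)"
  using Aut_eqI by (meson inj_onI)

lemma finite_Aut: "finite (Aut E P)" and card_Aut_le: "card (Aut E P) \<le> ext_degree E P"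
proof -
  have sub: "(\<lambda>\<sigma>. \<sigma> \<theta>) ` Aut E P \<subseteq> {y. poly (min_poly E \<theta>) y = 0}" using Aut_root by blast
  have fin: "finite {y. poly (min_poly E \<theta>) y = 0}" using poly_roots_finite[OF min_poly_nonzero[OF E alg]] .
  show "finite (Aut E P)" using finite_imageD[OF finite_subset[OF sub fin] inj_on_Aut_eval] .
  have "card (Aut E P) = card ((\<lambda>\<sigma>. \<sigma> \<theta>) ` Aut E P)" using card_image[OF inj_on_Aut_eval] by simp
  also have "\<dots> \<le> card {y. poly (min_poly E \<theta>) y = 0}" using card_mono[OF fin sub] .
  also have "\<dots> \<le> degree (min_poly E \<theta>)" using card_poly_roots_bound[OF min_poly_nonzero[OF E alg]] .
  finally show "card (Aut E P) \<le> ext_degree E P" using ext_degree_E_P by simp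
qed

lemma gen_field_root:
  assumes b: "\<beta> \<in> P" "poly (min_poly E \<theta>) \<beta> = 0"
  shows "gen_field (insert \<beta> E) = P"
proof -
  have ab: "alg_over E \<beta>" and mb: "min_poly E \<beta> = min_poly E \<theta>" using min_poly_of_root[OF E alg b(2)] by auto
  define Q where "Q = gen_field (insert \<beta> E)"
  have QP: "Q \<subseteq> P" unfolding Q_def using gen_field_least[OF P_subfield] E_subset_P b(1) by blast
  have "ext_degree E Q = ext_degree E P" unfolding Q_def using ext_degree_simple[OF E ab] mb ext_degree_E_P by simp
  moreover have "is_subfield Q" "E \<subseteq> Q" unfolding Q_def using gen_field_subfield gen_field_superset[of "insert \<beta> E"] by auto
  ultimately have "Q = P" using intermediate_eq_top[OF finite_ext_E_P _ _ QP] by blast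
  then show ?thesis unfolding Q_def .
qed

lemma Aut_of_root:
  assumes b: "\<beta> \<in> P" "poly (min_poly E \<theta>) \<beta> = 0"
  shows "\<exists>\<sigma>\<in>Aut E P. \<sigma> \<theta> = \<beta>"
proof -
  have b': "poly (map_poly (\<lambda>x. x) (min_poly E \<theta>)) \<beta> = 0" using b by simp
  obtain \<tau> where t: "hom_on P \<tau>" "\<forall>e\<in>E. \<tau> e = e" "\<tau> \<theta> = \<beta>" "\<forall>y. y \<notin> P \<longrightarrow> \<tau> y = y"
    "\<forall>p. poly_over E p \<longrightarrow> \<tau> (poly p \<theta>) = poly p \<beta>"
    using extend_hom_simple[OF E alg hom_on_id b'] Pdef by auto
  have "\<tau> ` P = {poly p \<beta> | p. poly_over E p}"
    unfolding P_eq_poly_image using t(5) by force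
  also have "\<dots> = P"
    using gen_field_insert_eq_poly_image[OF E min_poly_of_root(1)[OF E alg b(2)]] gen_field_root[OF b] by simp
  finally have "\<tau> \<in> Aut E P" using t by (intro AutI) auto
  then show ?thesis using t(3) by blast
qed

lemma bij_betw_Aut_roots: "bij_betw (\<lambda>\<sigma>. \<sigma> \<theta>) (Aut E P) {\<beta>\<in>P. poly (min_poly E \<theta>) \<beta> = 0}"
  unfolding bij_betw_def
proof
  show "inj_on (\<lambda>\<sigma>. \<sigma> \<theta>) (Aut E P)" by (rule inj_on_Aut_eval)
  show "(\<lambda>\<sigma>. \<sigma> \<theta>) ` Aut E P = {\<beta> \<in> P. poly (min_poly E \<theta>) \<beta> = 0}"
  proof
    show "(\<lambda>\<sigma>. \<sigma> \<theta>) ` Aut E P \<subseteq> {\<beta> \<in> P. poly (min_poly E \<theta>) \<beta> = 0}"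
      using Aut_root Aut_mem gen_in_P by blast
    show "{\<beta> \<in> P. poly (min_poly E \<theta>) \<beta> = 0} \<subseteq> (\<lambda>\<sigma>. \<sigma> \<theta>) ` Aut E P"
      using Aut_of_root by blast
  qed
qed

lemma card_roots_eq_card_Aut: "card {\<beta>\<in>P. poly (min_poly E \<theta>) \<beta> = 0} = card (Aut E P)"
  using bij_betw_same_card[OF bij_betw_Aut_roots] by simp

end



context simple_extension
begin

definition fixed_field :: "'a set" where "fixed_field = {x\<in>P. \<forall>\<sigma>\<in>Aut E P. \<sigma> x = x}"

lemma fixed_field_subfield: "is_subfield fixed_field"
proof -
  have h: "\<And>\<sigma>. \<sigma> \<in> Aut E P \<Longrightarrow> hom_on P \<sigma>" using AutD(1) by blast
  note P = P_subfield
  show ?thesis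
    unfolding is_subfield_def fixed_field_def
    by (auto simp: subfield_zero[OF P] subfield_one[OF P] subfield_add[OF P] subfield_diff[OF P]
        subfield_mult[OF P] subfield_inverse[OF P] hom_zero[OF P h] hom_one[OF P h] hom_add[OF P h]
        hom_diff[OF P h] hom_mult[OF P h] hom_inverse[OF P h])
qed

lemma E_subset_fixed_field: "E \<subseteq> fixed_field"
  unfolding fixed_field_def using E_subset_P AutD(2) by blast

lemma fixed_field_subset_P: "fixed_field \<subseteq> P"
  unfolding fixed_field_def by blast

definition orbit_poly :: "'a poly" where
  "orbit_poly = (\<Prod>\<sigma>\<in>Aut E P. [:- \<sigma> \<theta>, 1:])"

lemma orbit_poly_over_P: "poly_over P orbit_poly"
  unfolding orbit_poly_def
  by (rule poly_over_prod[OF P_subfield]) (use poly_over_linear[OF P_subfield] Aut_mem gen_in_P in blast)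

lemma map_poly_orbit_poly: assumes t: "\<tau> \<in> Aut E P" shows "map_poly \<tau> orbit_poly = orbit_poly"
proof -
  have h: "hom_on P \<tau>" using AutD(1)[OF t] .
  have "map_poly \<tau> orbit_poly = (\<Prod>\<sigma>\<in>Aut E P. map_poly \<tau> [:- \<sigma> \<theta>, 1:])"
    unfolding orbit_poly_def by (rule map_hom_prod[OF P_subfield h]) (use poly_over_linear[OF P_subfield] Aut_mem gen_in_P in blast)
  also have "\<dots> = (\<Prod>\<sigma>\<in>Aut E P. [:- (\<tau> \<circ> \<sigma>) \<theta>, 1:])"
    by (rule prod.cong) (auto simp: map_poly_linear[OF P_subfield h] Aut_mem gen_in_P)
  also have "\<dots> = (\<Prod>\<sigma>\<in>(\<lambda>\<sigma>. \<tau> \<circ> \<sigma>) ` Aut E P. [:- \<sigma> \<theta>, 1:])"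
    using prod.reindex[OF Aut_comp_inj[OF P_subfield t], of "\<lambda>\<sigma>. [:- \<sigma> \<theta>, 1:]"] by (simp add: o_def)
  also have "(\<lambda>\<sigma>. \<tau> \<circ> \<sigma>) ` Aut E P = Aut E P"
  proof (rule card_subset_eq[OF finite_Aut])
    show "(\<lambda>\<sigma>. \<tau> \<circ> \<sigma>) ` Aut E P \<subseteq> Aut E P" using Aut_comp[OF P_subfield t] by blast
    show "card ((\<lambda>\<sigma>. \<tau> \<circ> \<sigma>) ` Aut E P) = card (Aut E P)"
      using card_image[OF Aut_comp_inj[OF P_subfield t]] .
  qed
  finally show ?thesis unfolding orbit_poly_def .
qed

lemma orbit_poly_over_fixed_field: "poly_over fixed_field orbit_poly"
  unfolding poly_over_def fixed_field_def
proof (intro allI CollectI conjI ballI)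
  fix i show "coeff orbit_poly i \<in> P" using orbit_poly_over_P poly_over_coeff by blast
  fix \<tau> assume t: "\<tau> \<in> Aut E P"
  have "\<tau> (coeff orbit_poly i) = coeff (map_poly \<tau> orbit_poly) i" using coeff_map_hom[OF P_subfield AutD(1)[OF t]] by simp
  then show "\<tau> (coeff orbit_poly i) = coeff orbit_poly i" using map_poly_orbit_poly[OF t] by simp
qed

lemma orbit_poly_nonzero: "orbit_poly \<noteq> 0"
  unfolding orbit_poly_def using finite_Aut by (simp add: prod_zero_iff)

lemma degree_orbit_poly: "degree orbit_poly = card (Aut E P)"
  unfolding orbit_poly_def by (subst degree_prod_sum_eq) auto

lemma orbit_poly_root: "poly orbit_poly \<theta> = 0"
  unfolding orbit_poly_def poly_prod using finite_Aut Aut_id[of E P] by (auto intro!: prod_zero)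

lemma alg_over_fixed_field: "alg_over fixed_field \<theta>"
  unfolding alg_over_def using orbit_poly_nonzero orbit_poly_over_fixed_field orbit_poly_root by blast

lemma P_eq_gen_field_fixed_field: "P = gen_field (insert \<theta> fixed_field)"
proof
  have "gen_field (insert \<theta> E) \<subseteq> gen_field (insert \<theta> fixed_field)"
    by (rule gen_field_mono) (use E_subset_fixed_field in blast)
  then show "P \<subseteq> gen_field (insert \<theta> fixed_field)" using Pdef by simp
  show "gen_field (insert \<theta> fixed_field) \<subseteq> P"
    by (rule gen_field_least[OF P_subfield]) (use fixed_field_subset_P gen_in_P in blast)
qed

lemma simple_extension_fixed_field: "simple_extension fixed_field P \<theta>"
  unfolding simple_extension_def
  using fixed_field_subfield alg_over_fixed_field P_eq_gen_field_fixed_field by blast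

lemma Aut_fixed_field: "Aut fixed_field P = Aut E P"
proof
  show "Aut fixed_field P \<subseteq> Aut E P"
  proof
    fix \<sigma> assume s: "\<sigma> \<in> Aut fixed_field P"
    show "\<sigma> \<in> Aut E P" by (rule AutI) (use AutD[OF s] E_subset_fixed_field in auto)
  qed
  show "Aut E P \<subseteq> Aut fixed_field P"
  proof
    fix \<sigma> assume s: "\<sigma> \<in> Aut E P"
    have "\<And>x. x \<in> fixed_field \<Longrightarrow> \<sigma> x = x" using s unfolding fixed_field_def by blast
    then show "\<sigma> \<in> Aut fixed_field P" by (intro AutI) (use AutD[OF s] in auto)
  qed
qed

text \<open>Artin's bound: \<open>\<theta>\<close> is a root of \<open>orbit_poly\<close>, whose coefficients are fixed, so
  \<open>[P : fixed_field] \<le> |Aut(P/E)|\<close>; the reverse inequality holds because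
  \<open>Aut(P/fixed_field) = Aut(P/E)\<close> has at most \<open>[P : fixed_field]\<close> elements.\<close>

lemma ext_degree_fixed_field: "ext_degree fixed_field P = card (Aut E P)"
proof -
  interpret F: simple_extension fixed_field P \<theta> by (rule simple_extension_fixed_field)
  have "ext_degree fixed_field P = degree (min_poly fixed_field \<theta>)" by (rule F.ext_degree_E_P)
  also have "\<dots> \<le> degree orbit_poly"
    using min_poly_minimal[OF fixed_field_subfield alg_over_fixed_field orbit_poly_nonzero
        orbit_poly_over_fixed_field orbit_poly_root] .
  finally have le: "ext_degree fixed_field P \<le> card (Aut E P)" using degree_orbit_poly by simp
  have "card (Aut E P) \<le> ext_degree fixed_field P" using F.card_Aut_le Aut_fixed_field by simp
  then show ?thesis using le by simp
qed

lemma galois_ext_fixed_field: "galois_ext fixed_field P"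
proof -
  interpret F: simple_extension fixed_field P \<theta> by (rule simple_extension_fixed_field)
  show ?thesis unfolding galois_ext_def using F.finite_ext_E_P ext_degree_fixed_field Aut_fixed_field by simp
qed

lemma galois_intermediate_eq_fixed_field:
  assumes N: "E \<subseteq> N" "N \<subseteq> P" "galois_ext N P" and deg: "ext_degree N P = card (Aut E P)"
  shows "N = fixed_field"
proof -
  have sub: "Aut N P \<subseteq> Aut E P" using N(1) unfolding Aut_def is_embedding_def by blast
  have "card (Aut N P) = card (Aut E P)" using N(3) deg unfolding galois_ext_def by simp
  then have eq: "Aut N P = Aut E P" using card_subset_eq[OF finite_Aut sub] by simp
  have "N \<subseteq> fixed_field"
  proof
    fix x assume x: "x \<in> N"
    then have "\<forall>\<sigma>\<in>Aut N P. \<sigma> x = x" unfolding Aut_def is_embedding_def by blast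
    then show "x \<in> fixed_field" unfolding fixed_field_def using eq x N(2) by blast
  qed
  moreover have "finite_ext N P" using N(3) galois_ext_def by blast
  ultimately have "fixed_field = N"
    using intermediate_eq_bottom[OF _ fixed_field_subfield _ fixed_field_subset_P] ext_degree_fixed_field deg
    by simp
  then show ?thesis ..
qed

lemma chain_step_iff:
  assumes ne: "card (Aut E P) \<noteq> 1" and cs: "cluster_size E P = card (Aut E P)"
  shows "chain_step E P N \<longleftrightarrow> N = fixed_field"
proof -
  have "fixed_field \<noteq> P" using ext_degree_fixed_field ext_degree_self[OF P_subfield] ne by auto
  then have "is_subfield fixed_field \<and> E \<subseteq> fixed_field \<and> fixed_field \<subset> P \<and> galois_ext fixed_field P \<and>
      ext_degree fixed_field P = cluster_size E P"
    using fixed_field_subfield E_subset_fixed_field fixed_field_subset_P galois_ext_fixed_field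
      ext_degree_fixed_field cs by auto
  moreover have "N' = fixed_field"
    if "is_subfield N'" "E \<subseteq> N'" "N' \<subseteq> P" "galois_ext N' P" "ext_degree N' P = cluster_size E P" for N'
    using galois_intermediate_eq_fixed_field that cs by simp
  ultimately show ?thesis unfolding chain_step_def by blast
qed

end

section \<open>Separability over a perfect field\<close>

lemma coeff_eq_0_if_pderiv_eq_0:
  fixes g :: "'a::field poly"
  assumes "pderiv g = 0" and "\<not> CHAR('a) dvd k"
  shows "coeff g k = 0"
proof -
  have "k \<noteq> 0" using assms(2) by (intro notI) simp
  then have "of_nat k * coeff g k = coeff (pderiv g) (k - 1)" by (simp add: coeff_pderiv)
  moreover have "of_nat k \<noteq> (0::'a)" using assms(2) by (simp add: of_nat_eq_0_iff_char_dvd)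
  ultimately show ?thesis using assms(1) by simp
qed

text \<open>If \<open>g' = 0\<close> in characteristic \<open>p > 0\<close>, only the monomials \<open>X\<^sup>p\<^sup>j\<close> occur in \<open>g\<close>; taking
  \<open>p\<close>-th roots of their coefficients gives \<open>h\<close> with \<open>h ^ p = g\<close> by the freshman's dream.\<close>

lemma pderiv_eq_0_imp_pth_power:
  assumes Kp: "perfect_subfield K" and char: "CHAR('a::field) \<noteq> 0"
    and g: "poly_over K (g :: 'a poly)" and g': "pderiv g = 0"
  shows "\<exists>h. poly_over K h \<and> g = h ^ CHAR('a)"
proof -
  define p where "p = CHAR('a)"
  have K: "is_subfield K" using Kp perfect_subfield_def by blast
  have pp: "prime p" unfolding p_def using char prime_CHAR_semidom by blast
  have "\<forall>j. \<exists>z. z \<in> K \<and> z ^ p = coeff g (p * j)"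
    using Kp char poly_over_coeff[OF g] unfolding perfect_subfield_def p_def by blast
  then obtain r where r: "\<And>j. r j \<in> K" "\<And>j. r j ^ p = coeff g (p * j)" by metis
  define h where "h = (\<Sum>j\<le>degree g. monom (r j) j)"
  have "h ^ p = (\<Sum>j\<le>degree g. monom (r j) j ^ p)"
    unfolding h_def by (rule freshmans_dream_sum) (use pp in \<open>simp_all add: p_def\<close>)
  also have "\<dots> = (\<Sum>j\<le>degree g. monom (coeff g (p * j)) (j * p))" by (simp add: monom_power r(2))
  also have "\<dots> = g"
  proof (rule poly_eqI)
    fix k
    have lhs: "coeff (\<Sum>j\<le>degree g. monom (coeff g (p * j)) (j * p)) k =
        (\<Sum>j\<le>degree g. if k = j * p then coeff g (p * j) else 0)"
      by (simp add: coeff_sum coeff_monom eq_commute[of "_ * p" k])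
    show "coeff (\<Sum>j\<le>degree g. monom (coeff g (p * j)) (j * p)) k = coeff g k"
    proof (cases "p dvd k")
      case True
      then obtain j0 where j0: "k = p * j0" by blast
      have "(\<Sum>j\<le>degree g. if k = j * p then coeff g (p * j) else 0) =
          (\<Sum>j\<le>degree g. if j = j0 then coeff g (p * j) else 0)"
        by (rule sum.cong) (use j0 prime_gt_0_nat[OF pp] in \<open>auto simp: mult.commute\<close>)
      also have "\<dots> = coeff g k"
      proof (cases "j0 \<le> degree g")
        case False
        moreover have "j0 \<le> k" using j0 prime_gt_0_nat[OF pp] by simp
        ultimately have "degree g < k" by linarith
        then show ?thesis using False by (simp add: coeff_eq_0)
      qed (use j0 in simp)
      finally show ?thesis using lhs by simp
    next
      case False
      then have "(\<Sum>j\<le>degree g. if k = j * p then coeff g (p * j) else 0) = 0"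
        by (intro sum.neutral) auto
      then show ?thesis using lhs False coeff_eq_0_if_pderiv_eq_0[OF g'] by (simp add: p_def)
    qed
  qed
  finally show ?thesis
    using poly_over_sum_monom[OF K] r(1) unfolding h_def p_def by metis
qed

lemma pderiv_min_poly_nonzero:
  assumes Kp: "perfect_subfield K" and a: "alg_over K \<beta>"
  shows "pderiv (min_poly K \<beta>) \<noteq> 0"
proof
  assume g': "pderiv (min_poly K \<beta>) = 0"
  have K: "is_subfield K" using Kp perfect_subfield_def by blast
  note m = min_poly_props[OF K a]
  have dg: "degree (min_poly K \<beta>) \<ge> 1" using min_poly_degree_pos[OF K a] .
  show False
  proof (cases "CHAR('a) = 0")
    case True
    then have "lead_coeff (min_poly K \<beta>) = 0"
      using coeff_eq_0_if_pderiv_eq_0[OF g'] dg by simp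
    then show False using m(2) by simp
  next
    case False
    then obtain h where h: "poly_over K h" "min_poly K \<beta> = h ^ CHAR('a)"
      using pderiv_eq_0_imp_pth_power[OF Kp False m(1) g'] by blast
    have p1: "CHAR('a) > 1" using False prime_CHAR_semidom prime_gt_1_nat by blast
    have h0: "h \<noteq> 0" using min_poly_nonzero[OF K a] h(2) p1 by auto
    have "poly h \<beta> = 0" using m(3) h(2) by simp
    then have "degree (min_poly K \<beta>) \<le> degree h" using m(4)[OF h0 h(1)] by simp
    moreover have "degree (min_poly K \<beta>) = CHAR('a) * degree h" using h(2) degree_power_eq[OF h0] by simp
    ultimately show False using dg p1 by (simp add: mult_le_cancel2)
  qed
qed

text \<open>A double root \<open>y\<close> of the minimal polynomial \<open>g\<close> would also be a root of \<open>g'\<close>, which is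
  nonzero and of smaller degree; but \<open>g\<close> is also the minimal polynomial of \<open>y\<close>.\<close>

lemma min_poly_separable:
  assumes Kp: "perfect_subfield K" and a: "alg_over K \<beta>" and y: "poly (min_poly K \<beta>) y = 0"
  shows "poly (pderiv (min_poly K \<beta>)) y \<noteq> 0"
proof
  assume y': "poly (pderiv (min_poly K \<beta>)) y = 0"
  have K: "is_subfield K" using Kp perfect_subfield_def by blast
  have "degree (min_poly K y) \<le> degree (pderiv (min_poly K \<beta>))"
    using min_poly_minimal[OF K min_poly_of_root(1)[OF K a y] pderiv_min_poly_nonzero[OF Kp a]
        poly_over_pderiv[OF K min_poly_over[OF K a]] y'] .
  moreover have "degree (pderiv (min_poly K \<beta>)) \<le> degree (min_poly K \<beta>) - 1"
    by (rule degree_le) (auto simp: coeff_pderiv coeff_eq_0)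
  then have "degree (pderiv (min_poly K \<beta>)) < degree (min_poly K \<beta>)"
    using min_poly_degree_pos[OF K a] by simp
  ultimately show False using min_poly_of_root(2)[OF K a y] by simp
qed


section \<open>The primitive element theorem\<close>

lemma min_poly_degree_one_imp_mem:
  assumes E: "is_subfield E" and b: "alg_over E \<beta>" and d: "degree (min_poly E \<beta>) = 1"
  shows "\<beta> \<in> E"
proof -
  define c where "c = coeff (min_poly E \<beta>) 0"
  have "min_poly E \<beta> = [:c, 1:]"
  proof (rule poly_eqI)
    fix k show "coeff (min_poly E \<beta>) k = coeff [:c, 1:] k"
      using min_poly_monic[OF E b] d unfolding c_def
      by (cases k) (auto simp: coeff_eq_0 coeff_pCons split: nat.splits)
  qed
  then have "\<beta> = - c" using min_poly_root[OF E b] by (simp add: add_eq_0_iff)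
  moreover have "- c \<in> E" unfolding c_def by (rule subfield_uminus[OF E poly_over_coeff[OF min_poly_over[OF E b]]])
  ultimately show ?thesis by simp
qed

text \<open>In an algebraically closed field, a polynomial whose only root is \<open>\<beta>\<close> is a power of
  \<open>X - \<beta>\<close>; dividing a polynomial \<open>g\<close> with \<open>g'(\<beta>) \<noteq> 0\<close>, it must be linear.\<close>

lemma min_poly_degree_one_if_unique_root:
  fixes \<beta> :: "'a::alg_closed_field"
  assumes E: "is_subfield E" and b: "alg_over E \<beta>"
    and dvd: "min_poly E \<beta> dvd g" and sep: "poly (pderiv g) \<beta> \<noteq> 0"
    and unique: "\<And>y. poly (min_poly E \<beta>) y = 0 \<Longrightarrow> y = \<beta>"
  shows "degree (min_poly E \<beta>) = 1"
proof (rule ccontr)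
  let ?q = "min_poly E \<beta>"
  define l where "l = [:- \<beta>, 1:]"
  assume "degree ?q \<noteq> 1"
  then have d2: "degree ?q \<ge> 2" using min_poly_degree_pos[OF E b] by simp
  have "l dvd ?q" using min_poly_root[OF E b] by (simp add: l_def poly_eq_0_iff_dvd)
  then obtain q1 where q1: "?q = l * q1" by blast
  have "q1 \<noteq> 0" using q1 min_poly_nonzero[OF E b] by auto
  then have "degree ?q = 1 + degree q1" using q1 degree_mult_eq[of l q1] by (simp add: l_def)
  then obtain y where y: "poly q1 y = 0" using d2 alg_closed_imp_poly_has_root[of q1] by auto
  then have "poly ?q y = 0" using q1 by simp
  then have "y = \<beta>" by (rule unique)
  then have "l dvd q1" using y by (simp add: l_def poly_eq_0_iff_dvd)
  then obtain s where s: "q1 = l * s" by blast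
  obtain s' where "g = ?q * s'" using dvd by blast
  then have "g = l * (l * (s * s'))" by (simp only: q1 s mult.assoc)
  moreover have "poly l \<beta> = 0" by (simp add: l_def)
  ultimately have "poly (pderiv g) \<beta> = 0" by (simp add: pderiv_mult)
  then show False using sep by simp
qed

text \<open>For \<open>c \<in> K\<close> avoiding the finitely many values \<open>(u - \<alpha>) / (\<beta> - v)\<close>, with \<open>u\<close> a conjugate of
  \<open>\<alpha>\<close> and \<open>v \<noteq> \<beta>\<close> a conjugate of \<open>\<beta>\<close>, the element \<open>\<gamma> = \<alpha> + c\<beta>\<close> works: \<open>\<beta>\<close> is the only common root
  of \<open>min_poly K \<beta>\<close> and \<open>f(\<gamma> - cX)\<close>, so its minimal polynomial over \<open>K(\<gamma>)\<close> is linear.\<close>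

lemma primitive_element_pair:
  fixes K :: "'a::alg_closed_field set"
  assumes Kp: "perfect_subfield K" and inf: "infinite K" and a: "alg_over K \<alpha>" and b: "alg_over K \<beta>"
  shows "\<exists>\<gamma>. \<gamma> \<in> gen_field (insert \<alpha> (insert \<beta> K)) \<and>
    gen_field (insert \<alpha> (insert \<beta> K)) = gen_field (insert \<gamma> K)"
proof -
  have K: "is_subfield K" using Kp perfect_subfield_def by blast
  define f where "f = min_poly K \<alpha>"
  define g where "g = min_poly K \<beta>"
  define Bad where "Bad = (\<lambda>(u, v). (u - \<alpha>) / (\<beta> - v)) ` ({x. poly f x = 0} \<times> ({y. poly g y = 0} - {\<beta>}))"
  have "finite {x. poly f x = 0}" "finite {y. poly g y = 0}"
    unfolding f_def g_def using poly_roots_finite min_poly_nonzero[OF K a] min_poly_nonzero[OF K b] by blast+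
  then have "finite Bad" unfolding Bad_def by simp
  then obtain c where c: "c \<in> K" "c \<notin> Bad"
    using Diff_infinite_finite[OF _ inf] by (metis Diff_iff finite.emptyI infinite_imp_nonempty ex_in_conv)
  define \<gamma> where "\<gamma> = \<alpha> + c * \<beta>"
  define G where "G = gen_field (insert \<alpha> (insert \<beta> K))"
  define E where "E = gen_field (insert \<gamma> K)"
  have Gsf: "is_subfield G" and Esf: "is_subfield E" unfolding G_def E_def by (rule gen_field_subfield)+
  have KG: "insert \<alpha> (insert \<beta> K) \<subseteq> G" unfolding G_def by (rule gen_field_superset)
  have KE: "insert \<gamma> K \<subseteq> E" unfolding E_def by (rule gen_field_superset)
  have gG: "\<gamma> \<in> G" unfolding \<gamma>_def using KG c(1) by (intro subfield_add[OF Gsf] subfield_mult[OF Gsf]) auto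
  have cE: "c \<in> E" and gE: "\<gamma> \<in> E" using KE c(1) by auto
  define h where "h = pcompose f [:\<gamma>, - c:]"
  have hE: "poly_over E h" unfolding h_def f_def
    by (rule poly_over_pcompose[OF Esf poly_over_mono[OF min_poly_over[OF K a]]])
      (use KE in \<open>auto simp: poly_over_pCons[OF Esf] poly_over_const[OF Esf] gE cE subfield_uminus[OF Esf]\<close>)
  have ph: "poly h y = poly f (\<gamma> - c * y)" for y unfolding h_def by (simp add: poly_pcompose mult.commute)
  have gE': "poly_over E g" unfolding g_def using poly_over_mono[OF min_poly_over[OF K b]] KE by blast
  have gb: "poly g \<beta> = 0" and hb: "poly h \<beta> = 0"
    using min_poly_root[OF K b] min_poly_root[OF K a] unfolding g_def f_def ph \<gamma>_def by simp_all
  have bE_alg: "alg_over E \<beta>"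
    unfolding alg_over_def using min_poly_nonzero[OF K b] gE' gb g_def by blast
  obtain s where s: "g = min_poly E \<beta> * s" using min_poly_dvd[OF Esf bE_alg gE' gb] by blast
  obtain t where t: "h = min_poly E \<beta> * t" using min_poly_dvd[OF Esf bE_alg hE hb] by blast
  have unique: "y = \<beta>" if y: "poly (min_poly E \<beta>) y = 0" for y
  proof (rule ccontr)
    assume ne: "y \<noteq> \<beta>"
    have "poly g y = 0" "poly f (\<gamma> - c * y) = 0" using s t y ph[of y] by simp_all
    then have "((\<gamma> - c * y) - \<alpha>) / (\<beta> - y) \<in> Bad" unfolding Bad_def using ne by force
    moreover have "((\<gamma> - c * y) - \<alpha>) / (\<beta> - y) = c" using ne unfolding \<gamma>_def by (simp add: field_simps)
    ultimately show False using c(2) by simp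
  qed
  have sep: "poly (pderiv g) \<beta> \<noteq> 0" unfolding g_def by (rule min_poly_separable[OF Kp b min_poly_root[OF K b]])
  have "degree (min_poly E \<beta>) = 1"
    using min_poly_degree_one_if_unique_root[OF Esf bE_alg dvdI[OF s] sep unique] .
  then have bE: "\<beta> \<in> E" by (rule min_poly_degree_one_imp_mem[OF Esf bE_alg])
  have "\<alpha> = \<gamma> - c * \<beta>" unfolding \<gamma>_def by simp
  then have "\<alpha> \<in> E" using subfield_diff[OF Esf gE subfield_mult[OF Esf cE bE]] by simp
  then have "insert \<alpha> (insert \<beta> K) \<subseteq> E" using KE bE by blast
  then have "G \<subseteq> E" unfolding G_def by (rule gen_field_least[OF Esf])
  moreover have "insert \<gamma> K \<subseteq> G" using KG gG by blast
  then have "E \<subseteq> G" unfolding E_def by (rule gen_field_least[OF Gsf])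
  ultimately have "G = E" by (rule antisym)
  then show ?thesis using gG unfolding G_def E_def by (intro exI[of _ \<gamma>]) simp
qed


lemma gen_field_insert_cong:
  assumes "gen_field A = gen_field B"
  shows "gen_field (insert s A) = gen_field (insert s B)"
proof -
  have "gen_field (insert s A) \<subseteq> gen_field (insert s B)" if "gen_field A = gen_field B" for A B
  proof (rule gen_field_least[OF gen_field_subfield])
    have "A \<subseteq> gen_field B" using that gen_field_superset[of A] by blast
    also have "\<dots> \<subseteq> gen_field (insert s B)" by (rule gen_field_mono) blast
    finally show "insert s A \<subseteq> gen_field (insert s B)" using gen_field_superset[of "insert s B"] by blast
  qed
  from this[OF assms] this[OF assms[symmetric]] show ?thesis by (rule antisym)
qed

lemma primitive_element_infinite:
  fixes K :: "'a::alg_closed_field set"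
  assumes Kp: "perfect_subfield K" and inf: "infinite K" and KP: "finite_ext K P"
  shows "\<exists>\<theta>. primitive_elem K P \<theta>"
proof -
  have K: "is_subfield K" and P: "is_subfield P" and KsP: "K \<subseteq> P" using KP finite_extD by auto
  have gen: "\<exists>\<gamma>\<in>P. gen_field (K \<union> S) = gen_field (insert \<gamma> K)" if "finite S" "S \<subseteq> P" for S
    using that
  proof (induction S rule: finite_induct)
    case empty
    have "insert 0 K = K" using subfield_zero[OF K] by blast
    then show ?case using subfield_zero[OF P] by (intro bexI[of _ 0]) simp_all
  next
    case (insert s S)
    then have s: "s \<in> P" and "S \<subseteq> P" by simp_all
    then obtain \<gamma> where g: "\<gamma> \<in> P" "gen_field (K \<union> S) = gen_field (insert \<gamma> K)"
      using insert.IH by blast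
    obtain \<gamma>' where g': "\<gamma>' \<in> gen_field (insert s (insert \<gamma> K))"
      "gen_field (insert s (insert \<gamma> K)) = gen_field (insert \<gamma>' K)"
      using primitive_element_pair[OF Kp inf alg_over_finite_ext[OF KP s] alg_over_finite_ext[OF KP g(1)]]
      by blast
    have "insert s (insert \<gamma> K) \<subseteq> P" using s g(1) KsP by blast
    then have "\<gamma>' \<in> P" using g'(1) gen_field_least[OF P] by blast
    moreover have "gen_field (K \<union> insert s S) = gen_field (insert s (insert \<gamma> K))"
      using gen_field_insert_cong[OF g(2)] by simp
    ultimately show ?case using g'(2) by auto
  qed
  obtain B where B: "is_basis_over K P B" using KP finite_ext_def by blast
  then have "finite B" "B \<subseteq> P" using basis_over_finite unfolding is_basis_over_def by auto
  then obtain \<gamma> where "\<gamma> \<in> P" "gen_field (K \<union> B) = gen_field (insert \<gamma> K)" using gen by blast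
  then show ?thesis unfolding primitive_elem_def using gen_field_basis[OF KP B] by auto
qed

text \<open>A subfield as a ring in the sense of HOL-Algebra, which provides the cyclicity of the
  multiplicative group of a finite field.\<close>

definition subfield_ring :: "'a::field set \<Rightarrow> 'a ring" where
  "subfield_ring P = \<lparr>carrier = P, monoid.mult = (*), one = 1, zero = 0, add = (+)\<rparr>"

lemma field_subfield_ring: assumes P: "is_subfield P" shows "field (subfield_ring P)"
proof -
  have ag: "abelian_group (subfield_ring P)"
  proof (rule abelian_groupI)
    fix x assume "x \<in> carrier (subfield_ring P)"
    then show "\<exists>y\<in>carrier (subfield_ring P). y \<oplus>\<^bsub>subfield_ring P\<^esub> x = \<zero>\<^bsub>subfield_ring P\<^esub>"
      using subfield_uminus[OF P] by (intro bexI[of _ "- x"]) (auto simp: subfield_ring_def)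
  qed (auto simp: subfield_ring_def subfield_add[OF P] subfield_zero[OF P] ac_simps)
  have cm: "comm_monoid (subfield_ring P)"
    by (rule comm_monoidI) (auto simp: subfield_ring_def subfield_mult[OF P] subfield_one[OF P] ac_simps)
  have cr: "cring (subfield_ring P)" by (rule cringI[OF ag cm]) (simp add: subfield_ring_def distrib_right)
  show ?thesis
  proof (rule cring.cring_fieldI2[OF cr])
    show "\<zero>\<^bsub>subfield_ring P\<^esub> \<noteq> \<one>\<^bsub>subfield_ring P\<^esub>" by (simp add: subfield_ring_def)
    fix a assume "a \<in> carrier (subfield_ring P)" "a \<noteq> \<zero>\<^bsub>subfield_ring P\<^esub>"
    then show "\<exists>b\<in>carrier (subfield_ring P). a \<otimes>\<^bsub>subfield_ring P\<^esub> b = \<one>\<^bsub>subfield_ring P\<^esub>"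
      using subfield_inverse[OF P] by (intro bexI[of _ "inverse a"]) (auto simp: subfield_ring_def)
  qed
qed

lemma subfield_ring_carrier: "carrier (subfield_ring P) = P"
  and subfield_ring_zero: "zero (subfield_ring P) = 0"
  by (simp_all add: subfield_ring_def)

lemma subfield_ring_pow: "a [^]\<^bsub>subfield_ring P\<^esub> (i::nat) = a ^ i"
  by (induction i) (simp_all add: nat_pow_def subfield_ring_def mult.commute)

lemma finite_span_over:
  assumes fK: "finite K" and fB: "finite B" shows "finite (span_over K B)"
proof -
  have "span_over K B \<subseteq> (\<lambda>c. \<Sum>s\<in>B. c s * s) ` (B \<rightarrow>\<^sub>E K)"
  proof
    fix x assume "x \<in> span_over K B"
    then obtain c where c: "\<forall>s\<in>B. c s \<in> K" "x = (\<Sum>s\<in>B. c s * s)" unfolding span_over_def by blast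
    have "restrict c B \<in> B \<rightarrow>\<^sub>E K" using c(1) by auto
    moreover have "x = (\<Sum>s\<in>B. restrict c B s * s)" using c(2) by simp
    ultimately show "x \<in> (\<lambda>c. \<Sum>s\<in>B. c s * s) ` (B \<rightarrow>\<^sub>E K)" by blast
  qed
  moreover have "finite (B \<rightarrow>\<^sub>E K)" using fK fB by (simp add: finite_PiE)
  ultimately show ?thesis using finite_subset by blast
qed

lemma primitive_element_finite:
  fixes K :: "'a::field set"
  assumes fK: "finite K" and KP: "finite_ext K P"
  shows "\<exists>\<theta>. primitive_elem K P \<theta>"
proof -
  have K: "is_subfield K" and P: "is_subfield P" and KsP: "K \<subseteq> P" using KP finite_extD by auto
  obtain B where B: "is_basis_over K P B" using KP finite_ext_def by blast
  have fP: "finite P"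
    using finite_span_over[OF fK basis_over_finite[OF B]] B unfolding is_basis_over_def by simp
  interpret R: field "subfield_ring P" by (rule field_subfield_ring[OF P])
  have "finite (carrier (subfield_ring P))" using fP by (simp add: subfield_ring_def)
  then obtain a where a: "a \<in> carrier (mult_of (subfield_ring P))"
    "carrier (mult_of (subfield_ring P)) = {a [^]\<^bsub>subfield_ring P\<^esub> i | i::nat. i \<in> UNIV}"
    using R.finite_field_mult_group_has_gen by blast
  have aP: "a \<in> P" and gens: "P - {0} = {a ^ i | i::nat. True}"
    using a by (simp_all add: subfield_ring_pow subfield_ring_carrier subfield_ring_zero)
  have "P \<subseteq> gen_field (insert a K)"
  proof
    fix y assume y: "y \<in> P"
    show "y \<in> gen_field (insert a K)"
    proof (cases "y = 0")
      case True then show ?thesis using subfield_zero[OF gen_field_subfield] by simp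
    next
      case False
      then obtain i where "y = a ^ i" using gens y by blast
      moreover have "a \<in> gen_field (insert a K)" using gen_field_superset by blast
      ultimately show ?thesis using subfield_power[OF gen_field_subfield] by simp
    qed
  qed
  moreover have "gen_field (insert a K) \<subseteq> P" using gen_field_least[OF P] aP KsP by blast
  ultimately show ?thesis unfolding primitive_elem_def using aP by blast
qed

lemma primitive_element:
  fixes K :: "'a::alg_closed_field set"
  assumes "perfect_subfield K" "finite_ext K P"
  shows "\<exists>\<theta>. primitive_elem K P \<theta>"
  using primitive_element_infinite[OF assms(1) _ assms(2)] primitive_element_finite[OF _ assms(2)] by blast

lemma
  fixes K :: "'a::alg_closed_field set"
  assumes Kp: "perfect_subfield K" and P: "finite_ext K P"
  shows simple_extension_primitive_elem: "simple_extension K P (SOME \<theta>. primitive_elem K P \<theta>)"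
    and cluster_size_eq_card_Aut: "cluster_size K P = card (Aut K P)"
proof -
  define \<theta> where "\<theta> = (SOME \<theta>. primitive_elem K P \<theta>)"
  have pe: "primitive_elem K P \<theta>" unfolding \<theta>_def using someI_ex[OF primitive_element[OF Kp P]] .
  have K: "is_subfield K" using Kp perfect_subfield_def by blast
  have "alg_over K \<theta>" using alg_over_finite_ext[OF P] pe primitive_elem_def by blast
  then show st: "simple_extension K P (SOME \<theta>. primitive_elem K P \<theta>)"
    unfolding simple_extension_def \<theta>_def[symmetric] using K pe primitive_elem_def by blast
  interpret S: simple_extension K P \<theta> by (rule st[folded \<theta>_def])
  show "cluster_size K P = card (Aut K P)"
    unfolding cluster_size_def \<theta>_def[symmetric] using S.card_roots_eq_card_Aut .
qed


section \<open>Strong cluster magnification\<close>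

locale strong_magnification =
  fixes K L M F :: "'a::alg_closed_field set"
  assumes perfect: "perfect_subfield K" and KL: "finite_ext K L" and KM: "finite_ext K M"
    and KF: "K \<subseteq> F" and galois: "galois_ext K F" and disjoint: "lin_disjoint K (galois_closure K L) F"
    and compositum: "compositum L F = M"
begin

definition \<theta> where "\<theta> = (SOME \<theta>. primitive_elem K L \<theta>)"
definition \<phi> where "\<phi> = (SOME \<phi>. primitive_elem K F \<phi>)"
definition \<eta> where "\<eta> = (SOME \<eta>. primitive_elem K M \<eta>)"

lemma finite_ext_K_F: "finite_ext K F"
  using galois galois_ext_def by blast

sublocale SL: simple_extension K L \<theta>
  unfolding \<theta>_def by (rule simple_extension_primitive_elem[OF perfect KL])

sublocale SF: simple_extension K F \<phi>
  unfolding \<phi>_def by (rule simple_extension_primitive_elem[OF perfect finite_ext_K_F])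

sublocale SM: simple_extension K M \<eta>
  unfolding \<eta>_def by (rule simple_extension_primitive_elem[OF perfect KM])

abbreviation "m \<equiv> degree (min_poly K \<theta>)"
abbreviation "n \<equiv> degree (min_poly K \<phi>)"

lemma K_subfield: "is_subfield K"
  and L_subfield: "is_subfield L" and M_subfield: "is_subfield M" and F_subfield: "is_subfield F"
  using KL KM finite_ext_K_F finite_extD by auto

lemma M_eq_gen_field: "M = gen_field (L \<union> F)"
  using compositum unfolding compositum_def by simp

lemma L_subset_M: "L \<subseteq> M" and F_subset_M: "F \<subseteq> M" and K_subset_L: "K \<subseteq> L"
  using M_eq_gen_field gen_field_superset[of "L \<union> F"] KL finite_extD by auto

lemma M_eq_gen_field_F: "M = gen_field (insert \<theta> F)"
proof (rule equalityI[rotated])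
  show "gen_field (insert \<theta> F) \<subseteq> M"
    by (rule gen_field_least[OF M_subfield]) (use SL.gen_in_P L_subset_M F_subset_M in blast)
  have "L \<subseteq> gen_field (insert \<theta> F)"
    using SL.Pdef gen_field_mono[of "insert \<theta> K" "insert \<theta> F"] KF by blast
  then have "L \<union> F \<subseteq> gen_field (insert \<theta> F)" using gen_field_superset[of "insert \<theta> F"] by blast
  then show "M \<subseteq> gen_field (insert \<theta> F)" unfolding M_eq_gen_field by (rule gen_field_least[OF gen_field_subfield])
qed

lemma M_eq_gen_field_L: "M = gen_field (insert \<phi> L)"
proof (rule equalityI[rotated])
  show "gen_field (insert \<phi> L) \<subseteq> M"
    by (rule gen_field_least[OF M_subfield]) (use SF.gen_in_P L_subset_M F_subset_M in blast)
  have "F \<subseteq> gen_field (insert \<phi> L)"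
    using SF.Pdef gen_field_mono[of "insert \<phi> K" "insert \<phi> L"] K_subset_L by blast
  then have "L \<union> F \<subseteq> gen_field (insert \<phi> L)" using gen_field_superset[of "insert \<phi> L"] by blast
  then show "M \<subseteq> gen_field (insert \<phi> L)" unfolding M_eq_gen_field by (rule gen_field_least[OF gen_field_subfield])
qed

lemma alg_over_F_\<theta>: "alg_over F \<theta>"
  unfolding alg_over_def
  using min_poly_nonzero[OF K_subfield SL.alg] poly_over_mono[OF min_poly_over[OF K_subfield SL.alg] KF]
    min_poly_root[OF K_subfield SL.alg] by blast

lemma alg_over_L_\<phi>: "alg_over L \<phi>"
  unfolding alg_over_def
  using min_poly_nonzero[OF K_subfield SF.alg] poly_over_mono[OF min_poly_over[OF K_subfield SF.alg] K_subset_L]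
    min_poly_root[OF K_subfield SF.alg] by blast

lemma embedding_image_subset_galois_closure:
  assumes "is_embedding K L \<sigma>" shows "\<sigma> ` L \<subseteq> galois_closure K L"
proof -
  have "\<sigma> ` L \<subseteq> \<Union>{\<sigma> ` L | \<sigma>. is_embedding K L \<sigma>}" using assms by blast
  then show ?thesis unfolding galois_closure_def using gen_field_superset by blast
qed

lemma L_subset_galois_closure: "L \<subseteq> galois_closure K L"
proof -
  have "is_embedding K L (\<lambda>x. x)" unfolding is_embedding_def by simp
  then show ?thesis using embedding_image_subset_galois_closure by fastforce
qed

lemma basis_powers_\<theta>: "is_basis_over K L ((\<lambda>i. \<theta> ^ i) ` {..<m})"
  using basis_powers[OF K_subfield SL.alg] SL.P_eq_poly_image by simp

lemma lin_indep_over_F_powers_\<theta>: "lin_indep_over F ((\<lambda>i. \<theta> ^ i) ` {..<m})"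
proof -
  have "(\<lambda>i. \<theta> ^ i) ` {..<m} \<subseteq> galois_closure K L" "lin_indep_over K ((\<lambda>i. \<theta> ^ i) ` {..<m})"
    using basis_powers_\<theta> L_subset_galois_closure unfolding is_basis_over_def by auto
  then show ?thesis using disjoint unfolding lin_disjoint_def by blast
qed

lemma degree_min_poly_F_\<theta>: "degree (min_poly F \<theta>) = m"
proof -
  have le: "degree (min_poly F \<theta>) \<le> m"
    using min_poly_minimal[OF F_subfield alg_over_F_\<theta> min_poly_nonzero[OF K_subfield SL.alg]
        poly_over_mono[OF min_poly_over[OF K_subfield SL.alg] KF] min_poly_root[OF K_subfield SL.alg]] .
  have inj: "inj_on (\<lambda>i. \<theta> ^ i) {..<m}"
    using lin_indep_family_inj_on[OF K_subfield powers_lin_indep[OF K_subfield SL.alg]] .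
  have fi: "lin_indep_family F {..<m} (\<lambda>i. \<theta> ^ i)"
    using lin_indep_family_iff_image[OF inj] lin_indep_over_F_powers_\<theta> by simp
  show ?thesis
  proof (rule ccontr)
    assume "degree (min_poly F \<theta>) \<noteq> m"
    then have lt: "degree (min_poly F \<theta>) < m" using le by simp
    have "poly (min_poly F \<theta>) \<theta> = (\<Sum>i<m. coeff (min_poly F \<theta>) i * \<theta> ^ i)"
      by (rule poly_eq_sum_lessThan) (use lt in simp)
    then have z: "(\<Sum>i<m. coeff (min_poly F \<theta>) i * \<theta> ^ i) = 0"
      using min_poly_root[OF F_subfield alg_over_F_\<theta>] by simp
    have "coeff (min_poly F \<theta>) (degree (min_poly F \<theta>)) = 0"
      by (rule lin_indep_familyD[OF fi, of "\<lambda>i. coeff (min_poly F \<theta>) i"])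
        (use z lt poly_over_coeff[OF min_poly_over[OF F_subfield alg_over_F_\<theta>]] in auto)
    then show False using min_poly_monic[OF F_subfield alg_over_F_\<theta>] by simp
  qed
qed

lemma M_eq_span_over_F: "M = span_over F ((\<lambda>i. \<theta> ^ i) ` {..<m})"
proof -
  have "is_basis_over F {poly p \<theta> | p. poly_over F p} ((\<lambda>i. \<theta> ^ i) ` {..<m})"
    using basis_powers[OF F_subfield alg_over_F_\<theta>] degree_min_poly_F_\<theta> by simp
  moreover have "M = {poly p \<theta> | p. poly_over F p}"
    using gen_field_insert_eq_poly_image[OF F_subfield alg_over_F_\<theta>] M_eq_gen_field_F by simp
  ultimately show ?thesis unfolding is_basis_over_def by simp
qed

text \<open>Linear disjointness is used here: a basis of \<open>L/K\<close> stays independent over \<open>F\<close> after adding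
  any element of the Galois closure outside \<open>L\<close>, so such an element cannot lie in \<open>M = LF\<close>.\<close>

lemma M_inter_galois_closure_subset_L: "M \<inter> galois_closure K L \<subseteq> L"
proof
  fix x assume x: "x \<in> M \<inter> galois_closure K L"
  let ?W = "(\<lambda>i. \<theta> ^ i) ` {..<m}"
  show "x \<in> L"
  proof (rule ccontr)
    assume xL: "x \<notin> L"
    have W: "span_over K ?W = L" "?W \<subseteq> L" "lin_indep_over K ?W"
      using basis_powers_\<theta> unfolding is_basis_over_def by auto
    have "lin_indep_over K (insert x ?W)" using lin_indep_over_insert[OF K_subfield W(3)] xL W(1) by simp
    moreover have "insert x ?W \<subseteq> galois_closure K L" using x W(2) L_subset_galois_closure by blast
    ultimately have "lin_indep_over F (insert x ?W)" using disjoint unfolding lin_disjoint_def by blast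
    moreover have "x \<notin> ?W" using xL W(2) by blast
    ultimately have "x \<notin> span_over F ?W" using lin_indep_insert_not_in_span[OF F_subfield] by blast
    then show False using x M_eq_span_over_F by blast
  qed
qed

lemma ext_degree_L_M: "ext_degree L M = n"
proof -
  have "ext_degree K M = ext_degree F M * ext_degree K F"
    using ext_degree_tower[OF KM F_subfield KF F_subset_M] .
  moreover have "ext_degree K M = ext_degree L M * ext_degree K L"
    using ext_degree_tower[OF KM L_subfield K_subset_L L_subset_M] .
  moreover have "ext_degree F M = m"
    using ext_degree_simple[OF F_subfield alg_over_F_\<theta>] degree_min_poly_F_\<theta> M_eq_gen_field_F by simp
  ultimately show ?thesis
    using SL.ext_degree_E_P SF.ext_degree_E_P min_poly_degree_pos[OF K_subfield SL.alg] by simp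
qed

lemma min_poly_L_\<phi>: "min_poly L \<phi> = min_poly K \<phi>"
proof (rule min_poly_unique[OF L_subfield])
  show "poly_over L (min_poly K \<phi>)" using poly_over_mono[OF min_poly_over[OF K_subfield SF.alg] K_subset_L] .
  show "lead_coeff (min_poly K \<phi>) = 1" using min_poly_monic[OF K_subfield SF.alg] .
  show "poly (min_poly K \<phi>) \<phi> = 0" using min_poly_root[OF K_subfield SF.alg] .
  fix q assume q: "q \<noteq> 0" "poly_over L q" "poly q \<phi> = 0"
  have "degree (min_poly L \<phi>) = n"
    using ext_degree_simple[OF L_subfield alg_over_L_\<phi>] M_eq_gen_field_L ext_degree_L_M by simp
  then show "n \<le> degree q" using min_poly_minimal[OF L_subfield alg_over_L_\<phi> q] by simp
qed

definition conjugates_\<phi> where "conjugates_\<phi> = {\<beta>\<in>F. poly (min_poly K \<phi>) \<beta> = 0}"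

lemma card_conjugates_\<phi>: "card conjugates_\<phi> = n"
  using SF.card_roots_eq_card_Aut galois SF.ext_degree_E_P unfolding galois_ext_def conjugates_\<phi>_def by simp

lemma Aut_M_restrict:
  assumes t: "\<tau> \<in> Aut K M"
  shows "\<exists>\<sigma>\<in>Aut K L. \<forall>y\<in>L. \<tau> y = \<sigma> y"
proof -
  have "is_embedding K L \<tau>"
    unfolding is_embedding_iff_hom_on using hom_on_mono[OF AutD(1)[OF t] L_subset_M] AutD(2)[OF t] by blast
  then have "\<tau> ` L \<subseteq> M \<inter> galois_closure K L"
    using embedding_image_subset_galois_closure Aut_mem[OF t] L_subset_M by blast
  then have t\<theta>: "\<tau> \<theta> \<in> L" using M_inter_galois_closure_subset_L SL.gen_in_P by blast
  have \<theta>M: "\<theta> \<in> M" and KM': "K \<subseteq> M" using SL.gen_in_P K_subset_L L_subset_M by auto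
  have "\<tau> (poly (min_poly K \<theta>) \<theta>) = poly (min_poly K \<theta>) (\<tau> \<theta>)"
    using Aut_eval[OF M_subfield t K_subfield KM' min_poly_over[OF K_subfield SL.alg] \<theta>M] .
  then have "poly (min_poly K \<theta>) (\<tau> \<theta>) = 0"
    using min_poly_root[OF K_subfield SL.alg] hom_zero[OF M_subfield AutD(1)[OF t]] by simp
  then obtain \<sigma> where s: "\<sigma> \<in> Aut K L" "\<sigma> \<theta> = \<tau> \<theta>" using SL.Aut_of_root[OF t\<theta>] by blast
  have "\<tau> y = \<sigma> y" if "y \<in> L" for y
  proof -
    obtain p where p: "poly_over K p" "y = poly p \<theta>" using \<open>y \<in> L\<close> SL.P_eq_poly_image by blast
    have "\<tau> y = poly p (\<tau> \<theta>)" using Aut_eval[OF M_subfield t K_subfield KM' p(1) \<theta>M] p(2) by simp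
    also have "\<dots> = \<sigma> y"
      using Aut_eval[OF L_subfield s(1) K_subfield K_subset_L p(1) SL.gen_in_P] p(2) s(2) by simp
    finally show ?thesis .
  qed
  then show ?thesis using s(1) by blast
qed

lemma fixed_field_L_subset_M: "SL.fixed_field \<subseteq> SM.fixed_field"
proof
  fix x assume "x \<in> SL.fixed_field"
  then have x: "x \<in> L" "\<And>\<sigma>. \<sigma> \<in> Aut K L \<Longrightarrow> \<sigma> x = x" unfolding SL.fixed_field_def by auto
  have "\<tau> x = x" if "\<tau> \<in> Aut K M" for \<tau>
    using Aut_M_restrict[OF that] x by force
  then show "x \<in> SM.fixed_field" unfolding SM.fixed_field_def using x L_subset_M by blast
qed

lemma Aut_L_extend:
  assumes s: "\<sigma> \<in> Aut K L" and b: "\<beta> \<in> conjugates_\<phi>"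
  shows "\<exists>\<tau>. \<tau> \<in> Aut K M \<and> (\<forall>y\<in>L. \<tau> y = \<sigma> y) \<and> \<tau> \<phi> = \<beta>"
proof -
  have hs: "hom_on L \<sigma>" using AutD(1)[OF s] .
  have bF: "\<beta> \<in> F" and br: "poly (min_poly K \<phi>) \<beta> = 0" using b conjugates_\<phi>_def by auto
  have "map_poly \<sigma> (min_poly L \<phi>) = min_poly K \<phi>"
    unfolding min_poly_L_\<phi> using map_poly_fixed[OF K_subfield min_poly_over[OF K_subfield SF.alg]] AutD(2)[OF s]
    by blast
  then have r: "poly (map_poly \<sigma> (min_poly L \<phi>)) \<beta> = 0" using br by simp
  obtain \<tau> where t: "hom_on (gen_field (insert \<phi> L)) \<tau>" "\<forall>e\<in>L. \<tau> e = \<sigma> e" "\<tau> \<phi> = \<beta>"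
    "\<forall>y. y \<notin> gen_field (insert \<phi> L) \<longrightarrow> \<tau> y = y"
    "\<forall>p. poly_over L p \<longrightarrow> \<tau> (poly p \<phi>) = poly (map_poly \<sigma> p) \<beta>"
    using extend_hom_simple[OF L_subfield alg_over_L_\<phi> hs r] by blast
  have hM: "hom_on M \<tau>" using t(1) M_eq_gen_field_L by simp
  have M_eq: "M = {poly p \<phi> | p. poly_over L p}"
    using gen_field_insert_eq_poly_image[OF L_subfield alg_over_L_\<phi>] M_eq_gen_field_L by simp
  have "\<tau> ` M \<subseteq> M"
  proof
    fix z assume "z \<in> \<tau> ` M"
    then obtain p where p: "poly_over L p" "z = \<tau> (poly p \<phi>)" using M_eq by blast
    have "z = poly (map_poly \<sigma> p) \<beta>" using t(5) p by simp
    moreover have "poly_over M (map_poly \<sigma> p)"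
      using poly_over_mono[OF poly_over_map_poly[OF L_subfield hs p(1)]] AutD(3)[OF s] L_subset_M by simp
    ultimately show "z \<in> M" using poly_in_subfield[OF M_subfield] bF F_subset_M by blast
  qed
  moreover have "M \<subseteq> \<tau> ` M"
  proof -
    have tM: "is_subfield (\<tau> ` M)" using hom_image_subfield[OF M_subfield hM] .
    have L\<tau>: "L \<subseteq> \<tau> ` M"
    proof
      fix y assume "y \<in> L"
      then obtain x where "x \<in> L" "y = \<sigma> x" using AutD(3)[OF s] by blast
      then have "y = \<tau> x" using t(2) by simp
      then show "y \<in> \<tau> ` M" using \<open>x \<in> L\<close> L_subset_M by blast
    qed
    have "\<phi> \<in> M" using SF.gen_in_P F_subset_M by blast
    then have "\<beta> \<in> \<tau> ` M" using t(3) by (metis imageI)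
    then have "gen_field (insert \<beta> K) \<subseteq> \<tau> ` M"
      using L\<tau> K_subset_L by (intro gen_field_least[OF tM]) blast
    then have "F \<subseteq> \<tau> ` M" using SF.gen_field_root[OF bF br] by simp
    then have "gen_field (L \<union> F) \<subseteq> \<tau> ` M" using L\<tau> by (intro gen_field_least[OF tM]) blast
    then show ?thesis using M_eq_gen_field by simp
  qed
  ultimately have "\<tau> ` M = M" by (rule antisym)
  moreover have "\<And>x. x \<in> K \<Longrightarrow> \<tau> x = x" using t(2) AutD(2)[OF s] K_subset_L by auto
  moreover have "\<And>y. y \<notin> M \<Longrightarrow> \<tau> y = y" using t(4) M_eq_gen_field_L by simp
  ultimately have "\<tau> \<in> Aut K M" using AutI[OF hM] by blast
  then show ?thesis using t(2,3) by blast
qed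

text \<open>Each automorphism of \<open>L\<close> extends to \<open>M\<close> in \<open>n\<close> different ways, one for each conjugate
  of \<open>\<phi>\<close> in \<open>F\<close>.\<close>

lemma card_Aut_L_mult_le: "card (Aut K L) * n \<le> card (Aut K M)"
proof -
  obtain ext where ext: "\<And>\<sigma> \<beta>. \<sigma> \<in> Aut K L \<Longrightarrow> \<beta> \<in> conjugates_\<phi> \<Longrightarrow>
      ext \<sigma> \<beta> \<in> Aut K M \<and> (\<forall>y\<in>L. ext \<sigma> \<beta> y = \<sigma> y) \<and> ext \<sigma> \<beta> \<phi> = \<beta>"
    using Aut_L_extend by metis
  have "inj_on (\<lambda>(\<sigma>, \<beta>). ext \<sigma> \<beta>) (Aut K L \<times> conjugates_\<phi>)"
  proof (rule inj_onI, clarify)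
    fix \<sigma>1 \<beta>1 \<sigma>2 \<beta>2
    assume a: "\<sigma>1 \<in> Aut K L" "\<beta>1 \<in> conjugates_\<phi>" "\<sigma>2 \<in> Aut K L" "\<beta>2 \<in> conjugates_\<phi>"
      and eq: "ext \<sigma>1 \<beta>1 = ext \<sigma>2 \<beta>2"
    show "\<sigma>1 = \<sigma>2 \<and> \<beta>1 = \<beta>2"
    proof
      show "\<sigma>1 = \<sigma>2"
      proof
        fix y show "\<sigma>1 y = \<sigma>2 y"
          using ext[OF a(1,2)] ext[OF a(3,4)] eq AutD(4)[OF a(1)] AutD(4)[OF a(3)] by (cases "y \<in> L") auto
      qed
      show "\<beta>1 = \<beta>2" using ext[OF a(1,2)] ext[OF a(3,4)] eq by metis
    qed
  qed
  moreover have "(\<lambda>(\<sigma>, \<beta>). ext \<sigma> \<beta>) ` (Aut K L \<times> conjugates_\<phi>) \<subseteq> Aut K M" using ext by auto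
  ultimately have "card (Aut K L \<times> conjugates_\<phi>) \<le> card (Aut K M)"
    using card_inj_on_le SM.finite_Aut by blast
  then show ?thesis using card_conjugates_\<phi> by (simp add: card_cartesian_product)
qed

lemma card_Aut_M_ne_1:
  assumes "card (Aut K L) \<noteq> 1"
  shows "card (Aut K M) \<noteq> 1"
proof -
  have "card (Aut K L) \<ge> 1"
    using SL.finite_Aut Aut_id[of K L] by (metis One_nat_def Suc_leI card_gt_0_iff empty_iff)
  moreover have "n \<ge> 1" using min_poly_degree_pos[OF K_subfield SF.alg] .
  ultimately show ?thesis using assms card_Aut_L_mult_le
    by (metis dual_order.trans le_antisym mult_le_mono2 mult.right_neutral)
qed

text \<open>The fixed field of \<open>Aut(L/K)\<close> lies in that of \<open>Aut(M/K)\<close>, and the extension counting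
  above shows that \<open>[M : fixed_field L] = n \<cdot> |Aut(L/K)|\<close> is at most \<open>|Aut(M/K)| = [M : fixed_field M]\<close>.\<close>

lemma fixed_field_M_eq_L: "SM.fixed_field = SL.fixed_field"
proof -
  have fe: "finite_ext SL.fixed_field M"
    using finite_ext_intermediate(2)[OF KM SL.fixed_field_subfield] SL.E_subset_fixed_field
      SL.fixed_field_subset_P L_subset_M by blast
  have "ext_degree SL.fixed_field M = ext_degree L M * ext_degree SL.fixed_field L"
    using ext_degree_tower[OF fe L_subfield SL.fixed_field_subset_P L_subset_M] .
  then have "ext_degree SL.fixed_field M \<le> ext_degree SM.fixed_field M"
    using ext_degree_L_M SL.ext_degree_fixed_field SM.ext_degree_fixed_field card_Aut_L_mult_le
    by (simp add: mult.commute)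
  then have "ext_degree SM.fixed_field M = ext_degree SL.fixed_field M"
    using ext_degree_le_intermediate[OF fe SM.fixed_field_subfield fixed_field_L_subset_M SM.fixed_field_subset_P]
    by simp
  then show ?thesis
    using intermediate_eq_bottom[OF fe SM.fixed_field_subfield fixed_field_L_subset_M SM.fixed_field_subset_P]
    by simp
qed

lemma chain_step_M_iff_L:
  assumes "card (Aut K L) \<noteq> 1"
  shows "chain_step K M N \<longleftrightarrow> chain_step K L N"
  using SM.chain_step_iff[OF card_Aut_M_ne_1[OF assms] cluster_size_eq_card_Aut[OF perfect KM]]
    SL.chain_step_iff[OF assms cluster_size_eq_card_Aut[OF perfect KL]] fixed_field_M_eq_L by simp

end

theorem theorem8p14:
  fixes K L M :: "'a::alg_closed_field set" and Ns :: "'a set list"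
  assumes "perfect_subfield K"
    and "finite_ext K L" and "finite_ext K M"
    and "strong_cluster_magnification K L M"
    and "cluster_size K L \<noteq> 1"
  shows "unique_desc_chain K M Ns \<longleftrightarrow> unique_desc_chain K L Ns"
proof -
  obtain F where "K \<subseteq> F" "galois_ext K F" "lin_disjoint K (galois_closure K L) F" "compositum L F = M"
    using assms(4) unfolding strong_cluster_magnification_def by blast
  then interpret strong_magnification K L M F
    using assms(1-3) by unfold_locales
  have csL: "cluster_size K L = card (Aut K L)" and csM: "cluster_size K M = card (Aut K M)"
    using cluster_size_eq_card_Aut assms(1-3) by blast+
  then have "card (Aut K L) \<noteq> 1" using assms(5) by simp
  then show ?thesis
    using csL csM card_Aut_M_ne_1 chain_step_M_iff_L by (cases Ns) simp_all
qed

end
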